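(* Let $G$ be a simple loopless graph on the vertex set $[L]=\{1,\dots,L\}$ and let $(s_i)_{i=1}^{L}$ be a collection of $G$-independent semicircle variables in a $C^*$-probability space $(\mathcal{A},\tau)$ with faithful tracial state $\tau$. For any complex numbers $\alpha_1,\dots,\alpha_L$ and any integer $p\ge 1$, \[ \Big\|\sum_{i=1}^{L}\alpha_i s_i\Big\|_{2p}\le C_p^{\frac{1}{2p}}\min\Big\{\sum_{i=1}^{L}|\alpha_i|^2\,|c^*(i)|,\; p\sum_{i=1}^{L}|\alpha_i|^2\Big\}^{1/2}, \] where $|c^*(i)|$ is the size of the largest clique in $G$ containing $i$. In particular, \[ \Big\|\sum_{i=1}^{L}\alpha_i s_i\Big\|_{2p}\le C_p^{\frac{1}{2p}}\sqrt{\min(\omega(G),p)}\,\Big(\sum_{i=1}^{L}|\alpha_i|^2\Big)^{1/2}, \] where $\omega(G)$ is the clique number of $G$.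
   Context: $(\mathcal{A},\tau)$ is a unital $C^*$-algebra with a faithful tracial state $\tau$. For $u\in\mathcal{A}$, $\|u\|_{2p}:=\tau((uu^* )^p)^{1/(2p)}$. $C_p=\frac{1}{p+1}\binom{2p}{p}$ is the $p$-th Catalan number. A semicircle variable is a self-adjoint element whose distribution under $\tau$ is the standard semicircle law (density $\frac{1}{2\pi}\sqrt{4-x^2}$ on $[-2,2]$). Given a simple loopless graph $G$ on $[L]$, unital subalgebras $\mathcal{A}_1,\dots,\mathcal{A}_L\subset\mathcal{A}$ are $G$-independent if: (i) for every edge $(i,j)\in E(G)$, $\mathcal{A}_i$ and $\mathcal{A}_j$ are classically independent (they commute, and $\tau(ab)=\tau(a)\tau(b)$-type factorization holds; in particular mixed products of centered elements from distinct commuting algebras have trace zero); (ii) for every $k\ge1$ and index sequence $(i_1,\dots,i_k)\in[L]^k$ such that whenever $i_{j_1}=i_{j_2}$ with $j_1<j_2$ there is $j_3$ with $j_1<j_3<j_2$ and $(i_{j_1},i_{j_3})\notin E(G)$, one has $\tau(a_1\cdots a_k)=0$ for all $a_j\in\mathcal{A}_{i_j}$ with $\tau(a_j)=0$. Variables $s_1,\dots,s_L$ are $G$-independent if the unital $*$-subalgebras they generate are. Edges of $G$ thus correspond to classically independent (commuting) pairs and non-edges to free pairs. *)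

theory Defs
  imports "HOL-Analysis.Analysis"
begin

text \<open>The ambient type is a real
Banach algebra with unit; the complex scalar multiplication (extending the real one),
the involution and the state are explicit parameters.\<close>

definition cstar_tracial_space ::
  "(complex \<Rightarrow> 'a::{real_normed_algebra_1,banach} \<Rightarrow> 'a) \<Rightarrow> ('a \<Rightarrow> 'a) \<Rightarrow> ('a \<Rightarrow> complex) \<Rightarrow> bool"
where
  "cstar_tracial_space smul star tau \<longleftrightarrow>
     \<comment> \<open>complex algebra structure\<close>
     (\<forall>r x. smul (complex_of_real r) x = r *\<^sub>R x) \<and>
     (\<forall>c d x. smul (c * d) x = smul c (smul d x)) \<and>
     (\<forall>c d x. smul (c + d) x = smul c x + smul d x) \<and>
     (\<forall>c x y. smul c (x + y) = smul c x + smul c y) \<and>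
     (\<forall>c x y. smul c (x * y) = smul c x * y) \<and>
     (\<forall>c x y. smul c (x * y) = x * smul c y) \<and>
     (\<forall>c x. norm (smul c x) = cmod c * norm x) \<and>
     \<comment> \<open>involution and C*-identity\<close>
     (\<forall>x y. star (x + y) = star x + star y) \<and>
     (\<forall>c x. star (smul c x) = smul (cnj c) (star x)) \<and>
     (\<forall>x y. star (x * y) = star y * star x) \<and>
     (\<forall>x. star (star x) = x) \<and>
     (\<forall>x. norm (star x * x) = norm x ^ 2) \<and>
     \<comment> \<open>faithful tracial state\<close>
     (\<forall>x y. tau (x + y) = tau x + tau y) \<and>
     (\<forall>c x. tau (smul c x) = c * tau x) \<and>
     tau 1 = 1 \<and>
     (\<forall>x. Im (tau (star x * x)) = 0 \<and> Re (tau (star x * x)) \<ge> 0) \<and>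
     (\<forall>x. tau (star x * x) = 0 \<longrightarrow> x = 0) \<and>
     (\<forall>x y. tau (x * y) = tau (y * x))"

inductive_set gen_star_alg ::
  "(complex \<Rightarrow> 'a::ring_1 \<Rightarrow> 'a) \<Rightarrow> ('a \<Rightarrow> 'a) \<Rightarrow> 'a \<Rightarrow> 'a set"
  for smul star s
where
  gen: "s \<in> gen_star_alg smul star s"
| one: "1 \<in> gen_star_alg smul star s"
| add: "x \<in> gen_star_alg smul star s \<Longrightarrow> y \<in> gen_star_alg smul star s \<Longrightarrow> x + y \<in> gen_star_alg smul star s"
| mult: "x \<in> gen_star_alg smul star s \<Longrightarrow> y \<in> gen_star_alg smul star s \<Longrightarrow> x * y \<in> gen_star_alg smul star s"
| scale: "x \<in> gen_star_alg smul star s \<Longrightarrow> smul c x \<in> gen_star_alg smul star s"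
| star: "x \<in> gen_star_alg smul star s \<Longrightarrow> star x \<in> gen_star_alg smul star s"

text \<open>Standard semicircle element: self-adjoint with the moments of the semicircle law
(the distribution of a bounded self-adjoint element is determined by its moments).\<close>
definition semicircle_var :: "('a::monoid_mult \<Rightarrow> 'a) \<Rightarrow> ('a \<Rightarrow> complex) \<Rightarrow> 'a \<Rightarrow> bool" where
  "semicircle_var star tau s \<longleftrightarrow> star s = s \<and>
     (\<forall>k::nat. tau (s ^ k) =
        complex_of_real (integral {-2..2::real} (\<lambda>x. x ^ k * sqrt (4 - x\<^sup>2) / (2 * pi))))"

definition simple_graph :: "nat \<Rightarrow> (nat \<Rightarrow> nat \<Rightarrow> bool) \<Rightarrow> bool" where
  "simple_graph L E \<longleftrightarrow> (\<forall>i j. E i j \<longrightarrow> E j i) \<and> (\<forall>i. \<not> E i i) \<and>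
     (\<forall>i j. E i j \<longrightarrow> i \<in> {1..L} \<and> j \<in> {1..L})"

definition is_clique :: "nat \<Rightarrow> (nat \<Rightarrow> nat \<Rightarrow> bool) \<Rightarrow> nat set \<Rightarrow> bool" where
  "is_clique L E C \<longleftrightarrow> C \<subseteq> {1..L} \<and> (\<forall>i\<in>C. \<forall>j\<in>C. i \<noteq> j \<longrightarrow> E i j)"

definition max_clique_at :: "nat \<Rightarrow> (nat \<Rightarrow> nat \<Rightarrow> bool) \<Rightarrow> nat \<Rightarrow> nat" where
  "max_clique_at L E i = Max {card C | C. is_clique L E C \<and> i \<in> C}"

definition clique_number :: "nat \<Rightarrow> (nat \<Rightarrow> nat \<Rightarrow> bool) \<Rightarrow> nat" where
  "clique_number L E = Max {card C | C. is_clique L E C}"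

definition G_independent ::
  "nat \<Rightarrow> (nat \<Rightarrow> nat \<Rightarrow> bool) \<Rightarrow> ('a::ring_1 \<Rightarrow> complex) \<Rightarrow> (nat \<Rightarrow> 'a set) \<Rightarrow> bool" where
  "G_independent L E tau A \<longleftrightarrow>
     (\<forall>i\<in>{1..L}. \<forall>j\<in>{1..L}. E i j \<longrightarrow>
        (\<forall>a\<in>A i. \<forall>b\<in>A j. a * b = b * a \<and> tau (a * b) = tau a * tau b)) \<and>
     (\<forall>k::nat. \<forall>idx::nat \<Rightarrow> nat. \<forall>a::nat \<Rightarrow> 'a.
        k \<ge> 1 \<longrightarrow> (\<forall>j<k. idx j \<in> {1..L}) \<longrightarrow>
        (\<forall>j1 j2. j1 < j2 \<and> j2 < k \<and> idx j1 = idx j2 \<longrightarrow>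
           (\<exists>j3. j1 < j3 \<and> j3 < j2 \<and> \<not> E (idx j1) (idx j3))) \<longrightarrow>
        (\<forall>j<k. a j \<in> A (idx j) \<and> tau (a j) = 0) \<longrightarrow>
        tau (prod_list (map a [0..<k])) = 0)"

definition norm_2p :: "('a::monoid_mult \<Rightarrow> 'a) \<Rightarrow> ('a \<Rightarrow> complex) \<Rightarrow> nat \<Rightarrow> 'a \<Rightarrow> real" where
  "norm_2p star tau p u = Re (tau ((u * star u) ^ p)) powr (1 / (2 * real p))"

definition catalan :: "nat \<Rightarrow> real" where
  "catalan p = real (2 * p choose p) / real (p + 1)"

end

theory Submission
  imports Defs
begin

text \<open>Expanding \<open>(u u\<^sup>*)\<^sup>p\<close> turns \<open>\<tau>((u u\<^sup>*)\<^sup>p)\<close> into a weighted sum of traces of words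
  \<open>s\<^sub>i\<^sub>1 \<cdots> s\<^sub>i\<^sub>2\<^sub>p\<close>. The trace of a product of Chebyshev polynomials \<open>U\<^sub>m(s\<^sub>x)\<close> is
  determined by a few rules: factors at adjacent vertices commute, \<open>U\<^sub>m s = U\<^bsub>m+1\<^esub> + U\<^bsub>m-1\<^esub>\<close>,
  and, by \<open>G\<close>-independence and \<open>\<tau>(U\<^sub>m(s)) = 0\<close> for \<open>m \<ge> 1\<close>, the trace vanishes on words in
  which no two blocks of the same letter can be brought together by commutations. A stack machine
  that pairs each letter with an earlier equal one reachable through commuting letters obeys the
  same rules, so the trace of a word is the number of its accepting runs.

  Summing over all words with weights \<open>|\<alpha>\<^sub>i|\<close> and following the stack, a push of \<open>y\<close> costs
  \<open>c\<^sub>y |\<alpha>\<^sub>y|\<^sup>2\<close>, while the letters that can be popped at any moment form a clique. Hence for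
  every weight \<open>c\<close> that dominates the sizes of these cliques the sum is at most
  \<open>C\<^sub>p (\<Sum> c\<^sub>i |\<alpha>\<^sub>i|\<^sup>2)\<^sup>p\<close>, the Catalan number counting the push/pop patterns. The choices
  \<open>c\<^sub>i = |c\<^sup>*(i)|\<close> and \<open>c\<^sub>i = p\<close> give the two bounds.\<close>

section \<open>Dyck paths and Catalan numbers\<close>

fun dyck_paths :: "nat \<Rightarrow> nat \<Rightarrow> nat" where
  "dyck_paths 0 h = (if h = 0 then 1 else 0)"
| "dyck_paths (Suc n) h = (if h = 0 then 0 else dyck_paths n (h - 1)) + dyck_paths n (Suc h)"

lemma dyck_paths_eq_0: "odd (n + h) \<or> h > n \<Longrightarrow> dyck_paths n h = 0"
proof (induction n arbitrary: h)
  case 0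
  then show ?case by (cases h) simp_all
next
  case (Suc n)
  have "dyck_paths n (h - 1) = 0" if "h \<noteq> 0"
    using Suc.prems that by (intro Suc.IH) auto
  moreover have "dyck_paths n (Suc h) = 0"
    using Suc.prems by (intro Suc.IH) auto
  ultimately show ?case by simp
qed

lemma dyck_paths_diag [simp]: "dyck_paths n n = 1"
  by (induction n) (auto simp: dyck_paths_eq_0)

lemma dyck_paths_ballot:
  "int (dyck_paths (h + 2*r) h) = int ((h + 2*r) choose r) - (if r = 0 then 0 else int ((h + 2*r) choose (r - 1)))"
proof (induction "h + 2*r" arbitrary: h r)
  case 0
  then show ?case by simp
next
  case (Suc n)
  note n = Suc.hyps(2)
  show ?case
  proof (cases r)
    case 0
    then show ?thesis by simp
  next
    case r: (Suc r1)
    have up: "int (dyck_paths n (Suc h)) = int (n choose r1) - (if r1 = 0 then 0 else int (n choose (r1 - 1)))"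
      using Suc.hyps(1)[of "Suc h" r1] n r by simp
    have pascal: "Suc n choose r = (n choose r1) + (n choose Suc r1)"
      "r1 \<noteq> 0 \<Longrightarrow> Suc n choose r1 = (n choose (r1 - 1)) + (n choose r1)"
      using r by (simp, cases r1, auto)
    show ?thesis
    proof (cases h)
      case 0
      have "n choose Suc r1 = n choose r1"
        using binomial_symmetric[of r1 n] n r 0 by simp
      then show ?thesis using up pascal n r 0 by (cases "r1 = 0") auto
    next
      case (Suc h1)
      have "int (dyck_paths n h1) = int (n choose r) - (if r = 0 then 0 else int (n choose (r - 1)))"
        using Suc.hyps(1)[of h1 r] n Suc by simp
      then show ?thesis using up pascal n r Suc by (cases "r1 = 0") auto
    qed
  qed
qed

lemma dyck_paths_catalan: "real (dyck_paths (2*p) 0) = catalan p"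
proof (cases p)
  case 0
  then show ?thesis by (simp add: catalan_def)
next
  case (Suc q)
  have "int (dyck_paths (2*p) 0) = int (2*p choose p) - int (2*p choose q)"
    using dyck_paths_ballot[of 0 p] Suc by simp
  then have dyck: "real (dyck_paths (2*p) 0) = real (2*p choose p) - real (2*p choose q)"
    by (metis of_int_of_nat_eq of_int_diff)
  have "p * (2*p choose p) = (p + 1) * (2*p choose q)"
    using Suc_times_binomial_add[of q p] Suc by (simp add: mult_2)
  then have "real p * real (2*p choose p) = real (p + 1) * real (2*p choose q)"
    by (metis of_nat_mult)
  then show ?thesis unfolding catalan_def dyck by (simp add: field_simps)
qed

lemma catalan_Suc: "catalan (Suc j) * (real j + 2) = 2 * (2 * real j + 1) * catalan j"
proof -
  define B C where "B = 2*j choose j" and "C = 2*j + 2 choose (j + 1)"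
  have "C * (j + 1) = (2*j + 2) * (2*j + 1 choose j)"
    unfolding C_def using Suc_times_binomial_eq[of "2*j + 1" j] by simp
  also have "\<dots> = 2 * ((2*j + 1 choose (j + 1)) * (j + 1))"
    using binomial_symmetric[of j "2*j + 1"] by simp
  also have "\<dots> = 2 * ((2*j + 1) * B)"
    unfolding B_def using Suc_times_binomial_eq[of "2*j" j] by simp
  finally have key: "real C * (real j + 1) = 2 * (2 * real j + 1) * real B"
    by (metis (mono_tags) mult.assoc of_nat_1 of_nat_add of_nat_mult of_nat_numeral)
  have c: "catalan j = real B / (real j + 1)" "catalan (Suc j) = real C / (real j + 2)"
    unfolding catalan_def B_def C_def by (simp_all add: add.commute)
  have "real C = 2 * (2 * real j + 1) * real B / (real j + 1)"
    using key by (simp add: eq_divide_eq)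
  then show ?thesis unfolding c by simp
qed

lemma dyck_paths_0_rec: "real (dyck_paths (k + 2) 0) * (real k + 4) = 4 * (real k + 1) * real (dyck_paths k 0)"
proof (cases "even k")
  case False
  then show ?thesis by (simp add: dyck_paths_eq_0)
next
  case True
  then obtain j where k: "k = 2*j" by blast
  have "real (dyck_paths (k + 2) 0) = catalan (Suc j)" "real (dyck_paths k 0) = catalan j"
    using dyck_paths_catalan[of "Suc j"] dyck_paths_catalan[of j] k by simp_all
  then show ?thesis
    using catalan_Suc[of j] k by (simp add: algebra_simps)
qed

section \<open>Chebyshev polynomials of the second kind\<close>

fun chebyshev_U :: "'a::ring_1 \<Rightarrow> nat \<Rightarrow> 'a" where
  "chebyshev_U s 0 = 1"
| "chebyshev_U s (Suc 0) = s"
| "chebyshev_U s (Suc (Suc m)) = s * chebyshev_U s (Suc m) - chebyshev_U s m"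

lemma mult_chebyshev_U:
  "s * chebyshev_U s m = chebyshev_U s (Suc m) + (if m = 0 then 0 else chebyshev_U s (m - 1))"
  by (cases m) auto

lemma chebyshev_U_commute: "s * chebyshev_U s m = chebyshev_U s m * s"
proof (induction s m rule: chebyshev_U.induct)
  case (3 s m)
  then show ?case by (simp add: right_diff_distrib left_diff_distrib mult.assoc) (metis mult.assoc)
qed simp_all

lemma power_eq_sum_chebyshev_U: "s ^ k = (\<Sum>m\<le>k. of_nat (dyck_paths k m) * chebyshev_U s m)"
proof (induction k)
  case 0
  then show ?case by simp
next
  case (Suc k)
  define h where "h m = (of_nat (dyck_paths k m) :: 'a)" for m
  define U where "U m = chebyshev_U s m" for m
  have "s ^ Suc k = (\<Sum>m\<le>k. h m * (s * U m))"
    unfolding power_Suc Suc h_def U_def sum_distrib_left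
    by (intro sum.cong refl) (metis mult.assoc mult_of_nat_commute)
  also have "\<dots> = (\<Sum>m\<le>k. h m * U (Suc m)) + (\<Sum>m\<le>k. if m = 0 then 0 else h m * U (m - 1))"
    unfolding U_def mult_chebyshev_U by (simp add: distrib_left sum.distrib) (rule sum.cong; simp)
  also have "(\<Sum>m\<le>k. h m * U (Suc m)) = (\<Sum>m\<le>Suc k. if m = 0 then 0 else h (m - 1) * U m)"
    unfolding sum.atMost_Suc_shift by simp
  also have "(\<Sum>m\<le>k. if m = 0 then 0 else h m * U (m - 1)) = (\<Sum>m\<le>Suc k. h (Suc m) * U m)"
  proof (cases k)
    case (Suc k')
    have "h (Suc (Suc k')) = 0" "h (Suc (Suc (Suc k'))) = 0"
      unfolding h_def Suc by (simp_all add: dyck_paths_eq_0)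
    then have "(\<Sum>m\<le>Suc k. h (Suc m) * U m) = (\<Sum>m\<le>k'. h (Suc m) * U m)"
      unfolding Suc by simp
    also have "\<dots> = (\<Sum>m\<le>k. if m = 0 then 0 else h m * U (m - 1))"
      unfolding Suc sum.atMost_Suc_shift by simp
    finally show ?thesis ..
  qed (simp add: h_def dyck_paths_eq_0)
  also have "(\<Sum>m\<le>Suc k. if m = 0 then 0 else h (m - 1) * U m) + (\<Sum>m\<le>Suc k. h (Suc m) * U m)
      = (\<Sum>m\<le>Suc k. of_nat (dyck_paths (Suc k) m) * chebyshev_U s m)"
    unfolding h_def U_def sum.distrib[symmetric] by (intro sum.cong refl) (simp add: distrib_right)
  finally show ?case .
qed

section \<open>Moments of the semicircle law\<close>

definition semicircle_integral :: "nat \<Rightarrow> real" where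
  "semicircle_integral k = integral {-2..2} (\<lambda>x. x^k * sqrt (4 - x^2))"

lemma has_integral_semicircle_integral: "((\<lambda>x. x^k * sqrt (4 - x^2)) has_integral semicircle_integral k) {-2..2}"
  unfolding semicircle_integral_def
  by (intro integrable_integral integrable_continuous_interval continuous_intros)

lemma four_minus_square_pos:
  fixes x :: real
  assumes "-2 < x" "x < 2"
  shows "0 < 4 - x^2"
proof -
  have "0 < (2 - x) * (2 + x)" using assms by (intro mult_pos_pos) auto
  then show ?thesis by (simp add: power2_eq_square algebra_simps)
qed

lemma DERIV_sqrt_weight:
  fixes x :: real
  assumes "-2 < x" "x < 2"
  shows "((\<lambda>x. sqrt (4 - x^2)) has_real_derivative - x / sqrt (4 - x^2)) (at x)"
proof -
  have "((\<lambda>x. 4 - x^2) has_real_derivative - (2*x)) (at x)"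
    by (auto intro!: derivative_eq_intros)
  from DERIV_chain'[OF this DERIV_real_sqrt[OF four_minus_square_pos[OF assms]]]
  show ?thesis by (simp add: field_simps)
qed

lemma DERIV_power_times_weight:
  fixes x :: real
  assumes "-2 < x" "x < 2"
  shows "((\<lambda>x. x^k * ((4 - x^2) * sqrt (4 - x^2))) has_real_derivative
      4 * real k * x^(k - 1) * sqrt (4 - x^2) - (real k + 3) * x^(k + 1) * sqrt (4 - x^2)) (at x)"
proof -
  define w where "w = sqrt (4 - x^2)"
  have w: "4 - x^2 = w * w" "w > 0"
    unfolding w_def using four_minus_square_pos[OF assms] by (auto simp: power2_eq_square[symmetric])
  have "((\<lambda>x. 4 - x^2) has_real_derivative - (2*x)) (at x)"
    by (auto intro!: derivative_eq_intros)
  from DERIV_mult[OF DERIV_pow DERIV_mult[OF this DERIV_sqrt_weight[OF assms]]]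
  have D: "((\<lambda>x. x^k * ((4 - x^2) * sqrt (4 - x^2))) has_real_derivative
      real k * x^(k - 1) * ((4 - x^2) * w) + (- (2*x) * w + - x / w * (4 - x^2)) * x^k) (at x)"
    unfolding w_def by simp
  have e: "- x / w * (4 - x^2) = - x * w"
    unfolding w(1) using w(2) by simp
  have "real k * x^(k - 1) * ((4 - x^2) * w) + (- (2*x) * w + - x / w * (4 - x^2)) * x^k
      = 4 * real k * x^(k - 1) * w - (real k + 3) * x^(k + 1) * w"
    unfolding e by (cases k) (simp_all add: algebra_simps power2_eq_square)
  from DERIV_cong[OF D this] show ?thesis unfolding w_def .
qed

text \<open>Integration by parts against \<open>(4 - x\<^sup>2)\<^bsup>3/2\<^esup>\<close>, which vanishes at \<open>\<plusminus>2\<close>.\<close>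
lemma semicircle_integral_rec:
  "(real k + 3) * semicircle_integral (k + 1) = 4 * real k * semicircle_integral (k - 1)"
proof -
  define G where "G x = x^k * ((4 - x^2) * sqrt (4 - x^2))" for x :: real
  define g where "g x = 4 * real k * x^(k - 1) * sqrt (4 - x^2) - (real k + 3) * x^(k + 1) * sqrt (4 - x^2)"
    for x :: real
  have "(g has_integral (G 2 - G (-2))) {-2..2}"
  proof (rule fundamental_theorem_of_calculus_interior)
    show "continuous_on {-2..2} G" unfolding G_def by (intro continuous_intros)
    fix x :: real assume "x \<in> {-2<..<2}"
    then show "(G has_vector_derivative g x) (at x)"
      unfolding G_def g_def has_real_derivative_iff_has_vector_derivative[symmetric]
      using DERIV_power_times_weight[of x k] by auto
  qed simp
  then have zero: "(g has_integral 0) {-2..2}" unfolding G_def by simp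
  have "(g has_integral (4 * real k * semicircle_integral (k - 1)
      - (real k + 3) * semicircle_integral (k + 1))) {-2..2}"
    using has_integral_diff[OF has_integral_mult_right[OF has_integral_semicircle_integral[of "k - 1"], of "4 * real k"]
        has_integral_mult_right[OF has_integral_semicircle_integral[of "k + 1"], of "real k + 3"]]
    unfolding g_def by (simp add: algebra_simps)
  from has_integral_unique[OF zero this] show ?thesis by simp
qed

lemma DERIV_semicircle_antiderivative:
  fixes x :: real
  assumes "-2 < x" "x < 2"
  shows "((\<lambda>x. (x * sqrt (4 - x^2) + 4 * arcsin (x / 2)) / 2) has_real_derivative sqrt (4 - x^2)) (at x)"
proof -
  define w where "w = sqrt (4 - x^2)"
  have w: "4 - x^2 = w * w" "w > 0"
    unfolding w_def using four_minus_square_pos[OF assms] by (auto simp: power2_eq_square[symmetric])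
  have "sqrt (1 - (x / 2)^2) = sqrt ((4 - x^2) / 4)"
    by (simp add: field_simps power2_eq_square)
  also have "\<dots> = w / 2" unfolding w_def real_sqrt_divide by simp
  finally have arc: "sqrt (1 - (x / 2)^2) = w / 2" .
  have "((\<lambda>x. x / 2) has_real_derivative 1 / 2) (at x)"
    by (auto intro!: derivative_eq_intros)
  from DERIV_chain'[OF this DERIV_arcsin] assms
  have "((\<lambda>x. arcsin (x / 2)) has_real_derivative inverse (w / 2) * (1 / 2)) (at x)"
    unfolding arc by simp
  from DERIV_cdivide[OF DERIV_add[OF DERIV_mult[OF DERIV_ident DERIV_sqrt_weight[OF assms]]
      DERIV_cmult[OF this, of 4]], of 2]
  have D: "((\<lambda>x. (x * sqrt (4 - x^2) + 4 * arcsin (x / 2)) / 2) has_real_derivative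
      (1 * w + - x / w * x + 4 * (inverse (w / 2) * (1 / 2))) / 2) (at x)"
    unfolding w_def by simp
  have "(1 * w + - x / w * x + 4 * (inverse (w / 2) * (1 / 2))) / 2 = w"
    using w by (simp add: field_simps power2_eq_square)
  from DERIV_cong[OF D this] show ?thesis unfolding w_def .
qed

lemma semicircle_integral_0: "semicircle_integral 0 = 2 * pi"
proof -
  define F where "F x = (x * sqrt (4 - x^2) + 4 * arcsin (x / 2)) / 2" for x :: real
  have "((\<lambda>x. sqrt (4 - x^2)) has_integral (F 2 - F (-2))) {-2..2}"
  proof (rule fundamental_theorem_of_calculus_interior)
    show "continuous_on {-2..2} F" unfolding F_def by (auto intro!: continuous_intros)
    fix x :: real assume "x \<in> {-2<..<2}"
    then show "(F has_vector_derivative sqrt (4 - x^2)) (at x)"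
      unfolding F_def has_real_derivative_iff_has_vector_derivative[symmetric]
      by (auto intro: DERIV_semicircle_antiderivative)
  qed simp
  moreover have "F 2 - F (-2) = 2 * pi" unfolding F_def by simp
  ultimately have "((\<lambda>x. sqrt (4 - x^2)) has_integral 2 * pi) {-2..2}" by simp
  then show ?thesis
    using has_integral_semicircle_integral[of 0] by (simp add: has_integral_unique)
qed

lemma semicircle_integral_dyck_paths: "semicircle_integral k = 2 * pi * real (dyck_paths k 0)"
proof (induction k rule: less_induct)
  case (less k)
  consider "k = 0" | "k = 1" | j where "k = j + 2"
    by (metis One_nat_def add_2_eq_Suc' not0_implies_Suc)
  then show ?case
  proof cases
    case 1
    then show ?thesis by (simp add: semicircle_integral_0)
  next
    case 2
    then show ?thesis using semicircle_integral_rec[of 0] by simp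
  next
    case 3
    have "semicircle_integral k * (real j + 4) = 4 * (real j + 1) * semicircle_integral j"
      using semicircle_integral_rec[of "j + 1"] 3 by (simp add: algebra_simps)
    also have "\<dots> = 2 * pi * real (dyck_paths k 0) * (real j + 4)"
      using less.IH[of j] dyck_paths_0_rec[of j] 3 by simp
    finally show ?thesis by (simp add: add_pos_pos)
  qed
qed

lemma semicircle_moment:
  "integral {-2..2::real} (\<lambda>x. x ^ k * sqrt (4 - x\<^sup>2) / (2 * pi)) = real (dyck_paths k 0)"
  using has_integral_mult_right[OF has_integral_semicircle_integral[of k], of "1 / (2 * pi)"]
  by (intro integral_unique) (simp add: semicircle_integral_dyck_paths)

section \<open>Stack counts of words over a commutation graph\<close>

fun pop :: "('v \<Rightarrow> 'v \<Rightarrow> bool) \<Rightarrow> 'v \<Rightarrow> 'v list \<Rightarrow> 'v list option" where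
  "pop E y [] = None"
| "pop E y (z # r) = (if z = y then Some r else if E z y then map_option (Cons z) (pop E y r) else None)"

fun pop_many :: "('v \<Rightarrow> 'v \<Rightarrow> bool) \<Rightarrow> 'v \<Rightarrow> nat \<Rightarrow> 'v list \<Rightarrow> 'v list option" where
  "pop_many E y 0 r = Some r"
| "pop_many E y (Suc b) r = Option.bind (pop E y r) (pop_many E y b)"

text \<open>The stack holds the letters still waiting for a partner, top first. For blocks of multiplicity one, the runs ending with an empty stack
  correspond to the pairings of the word in which only pairs of commuting letters cross.\<close>
fun stack_count :: "('v \<Rightarrow> 'v \<Rightarrow> bool) \<Rightarrow> ('v \<times> nat) list \<Rightarrow> 'v list \<Rightarrow> nat" where
  "stack_count E [] r = (if r = [] then 1 else 0)"
| "stack_count E ((y, m) # w) r =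
     (\<Sum>b\<le>m. case pop_many E y b r of None \<Rightarrow> 0 | Some r' \<Rightarrow> stack_count E w (replicate (m - b) y @ r'))"

definition commute_step :: "('v \<Rightarrow> 'v \<Rightarrow> bool) \<Rightarrow> 'v list \<Rightarrow> 'v list \<Rightarrow> bool" where
  "commute_step E r r' \<longleftrightarrow> (\<exists>u a b v. r = u @ a # b # v \<and> r' = u @ b # a # v \<and> E a b)"

lemma commute_step_Cons: "commute_step E r r' \<Longrightarrow> commute_step E (z # r) (z # r')"
  unfolding commute_step_def by (metis append_Cons)

lemma commute_steps_Cons: "(commute_step E)\<^sup>*\<^sup>* r r' \<Longrightarrow> (commute_step E)\<^sup>*\<^sup>* (z # r) (z # r')"
  by (induction rule: rtranclp_induct) (auto intro: rtranclp.rtrancl_into_rtrancl commute_step_Cons)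

lemma commute_steps_append: "(commute_step E)\<^sup>*\<^sup>* r r' \<Longrightarrow> (commute_step E)\<^sup>*\<^sup>* (u @ r) (u @ r')"
  by (induction u) (auto intro: commute_steps_Cons)

lemma commute_steps_Cons_replicate:
  assumes "E y x"
  shows "(commute_step E)\<^sup>*\<^sup>* (y # replicate m x @ r) (replicate m x @ y # r)"
proof (induction m)
  case 0
  then show ?case by simp
next
  case (Suc m)
  have "commute_step E (y # x # replicate m x @ r) (x # y # replicate m x @ r)"
    unfolding commute_step_def using assms by (metis append_Nil)
  with commute_steps_Cons[OF Suc] show ?case
    by (simp add: converse_rtranclp_into_rtranclp)
qed

lemma commute_steps_replicate:
  assumes "E y x"
  shows "(commute_step E)\<^sup>*\<^sup>* (replicate n y @ replicate m x @ r) (replicate m x @ replicate n y @ r)"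
proof (induction n)
  case 0
  then show ?case by simp
next
  case (Suc n)
  have "(commute_step E)\<^sup>*\<^sup>* (y # replicate n y @ replicate m x @ r) (y # replicate m x @ replicate n y @ r)"
    using commute_steps_Cons[OF Suc] .
  moreover have "(commute_step E)\<^sup>*\<^sup>* (y # replicate m x @ replicate n y @ r) (replicate m x @ y # replicate n y @ r)"
    using commute_steps_Cons_replicate[of E y x, OF assms] .
  ultimately show ?case by (auto intro: rtranclp_trans)
qed

lemma rel_option_map_Cons:
  "rel_option (commute_step E)\<^sup>*\<^sup>* q q' \<Longrightarrow>
    rel_option (commute_step E)\<^sup>*\<^sup>* (map_option (Cons z) q) (map_option (Cons z) q')"
  by (auto simp: rel_option_iff commute_steps_Cons split: option.splits)

lemma pop_commute_step:
  assumes "symp E" "commute_step E r r'"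
  shows "rel_option (commute_step E)\<^sup>*\<^sup>* (pop E y r) (pop E y r')"
proof -
  obtain u a b v where r: "r = u @ a # b # v" "r' = u @ b # a # v" and ab: "E a b"
    using assms(2) unfolding commute_step_def by blast
  have step: "commute_step E (u @ a # b # q) (u @ b # a # q)" for u q
    using ab unfolding commute_step_def by blast
  show ?thesis
    unfolding r
  proof (induction u)
    case Nil
    have "E b a" using assms(1) ab by (blast dest: sympD)
    then show ?case
      using step[of "[]"] ab by (cases "a = b"; cases "pop E y v") (auto simp: rel_option_iff)
  next
    case (Cons z u)
    then show ?case
      using step[of u] by (auto simp: rel_option_map_Cons)
  qed
qed

lemma pop_commute_steps:
  assumes "symp E" "(commute_step E)\<^sup>*\<^sup>* r r'"
  shows "rel_option (commute_step E)\<^sup>*\<^sup>* (pop E y r) (pop E y r')"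
  using assms(2)
proof (induction rule: rtranclp_induct)
  case base
  then show ?case by (simp add: rel_option_reflI)
next
  case (step r1 r2)
  with pop_commute_step[OF assms(1) step(2), of y] show ?case
    by (auto simp: rel_option_iff split: option.splits intro: rtranclp_trans)
qed

lemma pop_many_commute_steps:
  assumes "symp E" "(commute_step E)\<^sup>*\<^sup>* r r'"
  shows "rel_option (commute_step E)\<^sup>*\<^sup>* (pop_many E y b r) (pop_many E y b r')"
  using assms(2)
proof (induction b arbitrary: r r')
  case 0
  then show ?case by simp
next
  case (Suc b)
  show ?case
  proof (cases "pop E y r")
    case None
    then show ?thesis using pop_commute_steps[OF assms(1) Suc(2), of y] by simp
  next
    case (Some q)
    then obtain q' where "pop E y r' = Some q'" "(commute_step E)\<^sup>*\<^sup>* q q'"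
      using pop_commute_steps[OF assms(1) Suc(2), of y] by (auto simp: option_rel_Some1)
    then show ?thesis using Some Suc.IH by simp
  qed
qed

lemma stack_count_commute_steps:
  assumes "symp E" "(commute_step E)\<^sup>*\<^sup>* r r'"
  shows "stack_count E w r = stack_count E w r'"
  using assms(2)
proof (induction w arbitrary: r r')
  case Nil
  have "r = [] \<longleftrightarrow> r' = []"
    using Nil by (induction rule: rtranclp_induct) (auto simp: commute_step_def)
  then show ?case by simp
next
  case (Cons l w)
  obtain y m where l: "l = (y, m)" by fastforce
  have "(case pop_many E y b r of None \<Rightarrow> 0 | Some q \<Rightarrow> stack_count E w (replicate (m - b) y @ q)) =
        (case pop_many E y b r' of None \<Rightarrow> 0 | Some q \<Rightarrow> stack_count E w (replicate (m - b) y @ q))" for b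
  proof (cases "pop_many E y b r")
    case None
    then show ?thesis using pop_many_commute_steps[OF assms(1) Cons(2), of y b] by simp
  next
    case (Some q)
    then obtain q' where "pop_many E y b r' = Some q'" "(commute_step E)\<^sup>*\<^sup>* q q'"
      using pop_many_commute_steps[OF assms(1) Cons(2), of y b] by (auto simp: option_rel_Some1)
    then show ?thesis using Some by (simp add: Cons.IH[OF commute_steps_append])
  qed
  then show ?case unfolding l by simp
qed

lemma stack_count_append_cong:
  "(\<And>r. stack_count E w r = stack_count E w' r) \<Longrightarrow> stack_count E (u @ w) r = stack_count E (u @ w') r"
proof (induction u arbitrary: r)
  case (Cons l u)
  obtain y m where "l = (y, m)" by fastforce
  with Cons show ?case by (simp split: option.split cong: option.case_cong)
qed simp

lemma case_option_add:
  "(case q of None \<Rightarrow> (0::nat) | Some r \<Rightarrow> f r + g r) =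
   (case q of None \<Rightarrow> 0 | Some r \<Rightarrow> f r) + (case q of None \<Rightarrow> 0 | Some r \<Rightarrow> g r)"
  by (cases q) auto

lemma stack_count_append_add:
  assumes "\<And>r. stack_count E w r = stack_count E w1 r + stack_count E w2 r"
  shows "stack_count E (u @ w) r = stack_count E (u @ w1) r + stack_count E (u @ w2) r"
proof (induction u arbitrary: r)
  case Nil
  then show ?case using assms by simp
next
  case (Cons l u)
  obtain y m where "l = (y, m)" by fastforce
  with Cons show ?case by (simp add: case_option_add sum.distrib cong: option.case_cong)
qed

lemma pop_many_Suc_right: "pop_many E y (Suc b) r = Option.bind (pop_many E y b r) (pop E y)"
proof (induction b arbitrary: r)
  case 0
  then show ?case by (cases "pop E y r") auto
next
  case (Suc b)
  then show ?case by (cases "pop E y r") auto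
qed

text \<open>The letter of the block \<open>(x, 1)\<close> is either pushed, or it pops the top copy of \<open>x\<close> pushed
  by \<open>(x, m)\<close>, or, when \<open>(x, m)\<close> pushed nothing, it pops from below like an \<open>(m+1)\<close>-st pop.\<close>
lemma stack_count_merge:
  "stack_count E ((x, m) # (x, 1) # w) r =
     stack_count E ((x, Suc m) # w) r + (if m = 0 then 0 else stack_count E ((x, m - 1) # w) r)"
proof -
  define f where "f b = (case pop_many E x b r of None \<Rightarrow> 0
      | Some q \<Rightarrow> stack_count E w (replicate (Suc m - b) x @ q))" for b
  define g where "g b = (case pop_many E x b r of None \<Rightarrow> 0
      | Some q \<Rightarrow> stack_count E w (replicate (m - 1 - b) x @ q))" for b
  define h where "h b = (case pop_many E x b r of None \<Rightarrow> 0
      | Some q \<Rightarrow> (case pop E x (replicate (m - b) x @ q) of None \<Rightarrow> 0 | Some q' \<Rightarrow> stack_count E w q'))" for b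
  have push_or_pop: "(\<Sum>b'\<le>Suc 0. case pop_many E x b' (replicate (m - b) x @ q) of None \<Rightarrow> 0
        | Some q' \<Rightarrow> stack_count E w (replicate (Suc 0 - b') x @ q')) =
      stack_count E w (replicate (Suc m - b) x @ q)
      + (case pop E x (replicate (m - b) x @ q) of None \<Rightarrow> 0 | Some q' \<Rightarrow> stack_count E w q')"
    if "b \<le> m" for b q
    using that by (simp add: atMost_Suc Suc_diff_le split: option.split)
  have "stack_count E ((x, m) # (x, 1) # w) r = (\<Sum>b\<le>m. f b + h b)"
    unfolding f_def h_def
    by (auto simp: push_or_pop case_option_add Suc_diff_le intro!: sum.cong split: option.split)
  moreover have "h b = g b" if "b < m" for b
  proof -
    have "replicate (m - b) x = x # replicate (m - 1 - b) x"
      using that by (simp add: Suc_diff_Suc flip: replicate_Suc)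
    then show ?thesis unfolding h_def g_def by (simp split: option.split)
  qed
  then have "(\<Sum>b\<le>m. h b) = (\<Sum>b<m. g b) + f (Suc m)"
    unfolding h_def f_def pop_many_Suc_right
    by (simp add: lessThan_Suc_atMost[symmetric] split: option.split)
  moreover have "(\<Sum>b<m. g b) = (if m = 0 then 0 else (\<Sum>b\<le>m - 1. g b))"
    by (cases m) (auto simp: lessThan_Suc_atMost)
  moreover have "stack_count E ((x, Suc m) # w) r = (\<Sum>b\<le>Suc m. f b)"
    unfolding f_def by simp
  moreover have "stack_count E ((x, m - 1) # w) r = (\<Sum>b\<le>m - 1. g b)"
    unfolding g_def by (simp del: One_nat_def)
  ultimately show ?thesis by (simp add: sum.distrib)
qed

lemma pop_replicate_other:
  assumes "E z y" "z \<noteq> y"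
  shows "pop E y (replicate n z @ q) = map_option ((@) (replicate n z)) (pop E y q)"
  using assms by (cases "pop E y q") (induction n; auto)+

lemma pop_many_replicate_other:
  assumes "E z y" "z \<noteq> y"
  shows "pop_many E y k (replicate n z @ q) = map_option ((@) (replicate n z)) (pop_many E y k q)"
proof (induction k arbitrary: q)
  case (Suc k)
  then show ?case by (cases "pop E y q") (auto simp: pop_replicate_other[of E z y, OF assms])
qed simp

lemma pop_pop_commute:
  assumes "symp E" "E x y" "x \<noteq> y"
  shows "Option.bind (pop E y r) (pop E x) = Option.bind (pop E x r) (pop E y)"
proof (induction r)
  case (Cons z r)
  have "E y x" using assms by (blast dest: sympD)
  with assms Cons show ?case
    by (cases "pop E y r"; cases "pop E x r") (auto split: option.splits)
qed simp

lemma pop_pop_many_commute: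
  assumes "symp E" "E x y" "x \<noteq> y"
  shows "Option.bind (pop E y r) (pop_many E x k) = Option.bind (pop_many E x k r) (pop E y)"
proof (induction k arbitrary: r)
  case (Suc k)
  have "Option.bind (pop E y r) (pop_many E x (Suc k))
      = Option.bind (Option.bind (pop E y r) (pop E x)) (pop_many E x k)"
    by (simp add: bind_assoc pop_many.simps(2)[abs_def])
  also have "\<dots> = Option.bind (pop E x r) (\<lambda>q. Option.bind (pop E y q) (pop_many E x k))"
    by (simp add: pop_pop_commute[OF assms])
  also have "\<dots> = Option.bind (pop_many E x (Suc k) r) (pop E y)"
    by (simp add: Suc)
  finally show ?case .
qed (simp add: pop_many.simps(1)[abs_def])

lemma pop_many_commute:
  assumes "symp E" "E x y" "x \<noteq> y"
  shows "Option.bind (pop_many E y j r) (pop_many E x k) = Option.bind (pop_many E x k r) (pop_many E y j)"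
proof (induction j arbitrary: r)
  case (Suc j)
  have "Option.bind (pop_many E y (Suc j) r) (pop_many E x k)
      = Option.bind (Option.bind (pop E y r) (pop_many E x k)) (pop_many E y j)"
    by (simp add: Suc)
  also have "\<dots> = Option.bind (pop_many E x k r) (pop_many E y (Suc j))"
    by (simp add: pop_pop_many_commute[OF assms] bind_assoc pop_many.simps(2)[abs_def])
  finally show ?case .
qed (simp add: pop_many.simps(1)[abs_def])

lemma stack_count_Cons_Cons:
  assumes "E y x" "y \<noteq> x"
  shows "stack_count E ((y, b) # (x, a) # w) r = (\<Sum>j\<le>b. \<Sum>k\<le>a.
      case Option.bind (pop_many E y j r) (pop_many E x k) of None \<Rightarrow> 0
      | Some q \<Rightarrow> stack_count E w (replicate (a - k) x @ replicate (b - j) y @ q))"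
proof -
  have "(case q of None \<Rightarrow> 0 | Some q \<Rightarrow> (\<Sum>k\<le>a. case pop_many E x k (replicate (b - j) y @ q) of None \<Rightarrow> 0
        | Some q' \<Rightarrow> stack_count E w (replicate (a - k) x @ q')))
      = (\<Sum>k\<le>a. case Option.bind q (pop_many E x k) of None \<Rightarrow> 0
        | Some q \<Rightarrow> stack_count E w (replicate (a - k) x @ replicate (b - j) y @ q))" for j q
    by (cases q) (auto simp: pop_many_replicate_other[of E y x, OF assms] intro!: sum.cong split: option.split)
  then show ?thesis by (simp cong: option.case_cong)
qed

lemma stack_count_swap:
  assumes "symp E" "E x y" "x \<noteq> y"
  shows "stack_count E ((y, b) # (x, a) # w) r = stack_count E ((x, a) # (y, b) # w) r"
proof -
  have yx: "E y x" using assms by (blast dest: sympD)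
  have "stack_count E w (replicate (a - k) x @ replicate (b - j) y @ q)
      = stack_count E w (replicate (b - j) y @ replicate (a - k) x @ q)" for j k q
    using stack_count_commute_steps[OF assms(1) commute_steps_replicate[of E x y, OF assms(2)]] .
  then show ?thesis
    unfolding stack_count_Cons_Cons[of E y x, OF yx not_sym[OF assms(3)]]
      stack_count_Cons_Cons[of E x y, OF assms(2,3)]
    by (subst sum.swap) (simp add: pop_many_commute[OF assms] cong: option.case_cong)
qed

text \<open>The negation of \<open>reducible\<close> is the index condition in clause (ii) of \<open>G\<close>-independence.\<close>
definition reducible :: "('v \<Rightarrow> 'v \<Rightarrow> bool) \<Rightarrow> ('v \<times> nat) list \<Rightarrow> bool" where
  "reducible E w \<longleftrightarrow> (\<exists>u x a c b v. w = u @ (x, a) # c @ (x, b) # v \<and> (\<forall>l\<in>set c. E x (fst l)))"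

lemma reducible_append: "reducible E u \<Longrightarrow> reducible E (u @ v)"
  unfolding reducible_def by fastforce

lemma not_reducible_nth:
  assumes "\<not> reducible E w" "j1 < j2" "j2 < length w" "fst (w ! j1) = fst (w ! j2)"
  shows "\<exists>j3. j1 < j3 \<and> j3 < j2 \<and> \<not> E (fst (w ! j1)) (fst (w ! j3))"
proof (rule ccontr)
  assume commuting: "\<nexists>j3. j1 < j3 \<and> j3 < j2 \<and> \<not> E (fst (w ! j1)) (fst (w ! j3))"
  define c where "c = take (j2 - Suc j1) (drop (Suc j1) w)"
  have "w = take j1 w @ w ! j1 # c @ w ! j2 # drop (Suc j2) w"
    unfolding c_def using assms(2,3)
    by (metis Cons_nth_drop_Suc append_take_drop_id drop_drop le_add_diff_inverse2 less_imp_le_nat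
        less_trans Suc_leI)
  then have "w = take j1 w @ (fst (w ! j1), snd (w ! j1)) # c @ (fst (w ! j1), snd (w ! j2)) # drop (Suc j2) w"
    using assms(4) by (metis prod.collapse)
  moreover have "E (fst (w ! j1)) (fst l)" if "l \<in> set c" for l
  proof -
    obtain t where "t < length c" "l = c ! t" using \<open>l \<in> set c\<close> by (metis in_set_conv_nth)
    then have "l = w ! (Suc j1 + t)" "j1 < Suc j1 + t" "Suc j1 + t < j2"
      unfolding c_def using assms(2,3) by auto
    then show ?thesis using commuting by blast
  qed
  ultimately show False using assms(1) unfolding reducible_def by blast
qed

definition stack_of :: "('v \<times> nat) list \<Rightarrow> 'v list" where
  "stack_of w = concat (map (\<lambda>(y, k). replicate k y) (rev w))"

lemma stack_of_eq_Nil: "stack_of w = [] \<longleftrightarrow> (\<forall>l\<in>set w. snd l = 0)"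
  unfolding stack_of_def by auto

lemma stack_of_snoc: "stack_of (w @ [(y, k)]) = replicate k y @ stack_of w"
  unfolding stack_of_def by simp

lemma reducible_insert_commuting:
  assumes "reducible E (w @ [(y, m)])" "E y z"
  shows "reducible E (w @ [(z, k), (y, m)])"
proof -
  obtain u x a c b v where split: "w @ [(y, m)] = u @ (x, a) # c @ (x, b) # v"
    and c: "\<forall>l\<in>set c. E x (fst l)"
    using assms(1) unfolding reducible_def by blast
  show ?thesis
  proof (cases v rule: rev_cases)
    case Nil
    with split have "w = u @ (x, a) # c" "x = y" by auto
    then show ?thesis
      unfolding reducible_def using c assms(2)
      by (intro exI[of _ u] exI[of _ x] exI[of _ a] exI[of _ "c @ [(z, k)]"] exI[of _ m] exI[of _ "[]"]) auto
  next
    case (snoc v' l')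
    with split have "w = u @ (x, a) # c @ (x, b) # v'" by auto
    then show ?thesis
      unfolding reducible_def using c
      by (intro exI[of _ u] exI[of _ x] exI[of _ a] exI[of _ c] exI[of _ b] exI[of _ "v' @ [(z, k), (y, m)]"]) auto
  qed
qed

lemma pop_stack_of_irreducible:
  assumes "symp E" "\<not> reducible E (w @ [(y, m)])" "\<forall>l\<in>set w. snd l \<ge> 1"
  shows "pop E y (stack_of w) = None"
  using assms(2,3)
proof (induction w rule: rev_induct)
  case Nil
  then show ?case by (simp add: stack_of_def)
next
  case (snoc l w)
  obtain z k where l: "l = (z, k)" by fastforce
  then obtain k' where k: "k = Suc k'" using snoc.prems by (cases k) auto
  have irreducible: "\<not> reducible E (w @ [(z, k), (y, m)])"
    using snoc.prems(1) l by simp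
  have "z \<noteq> y"
  proof
    assume "z = y"
    then have "reducible E (w @ [(z, k), (y, m)])"
      unfolding reducible_def
      by (intro exI[of _ w] exI[of _ y] exI[of _ k] exI[of _ "[]"] exI[of _ m] exI[of _ "[]"]) auto
    with irreducible show False by simp
  qed
  show ?case
  proof (cases "E z y")
    case True
    then have "E y z" using assms(1) by (blast dest: sympD)
    then have "\<not> reducible E (w @ [(y, m)])"
      using irreducible reducible_insert_commuting[of E w y m z k] by blast
    with snoc have "pop E y (stack_of w) = None" by simp
    then show ?thesis
      unfolding l stack_of_snoc using pop_replicate_other[of E z y, OF True \<open>z \<noteq> y\<close>] by simp
  next
    case False
    then show ?thesis unfolding l stack_of_snoc k using \<open>z \<noteq> y\<close> by simp
  qed
qed

text \<open>Without a reducible pair nothing can ever be popped, so the stack never empties.\<close>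
lemma stack_count_irreducible:
  assumes "symp E"
  shows "\<not> reducible E (u @ w) \<Longrightarrow> \<forall>l\<in>set (u @ w). snd l \<ge> 1 \<Longrightarrow> u @ w \<noteq> [] \<Longrightarrow>
    stack_count E w (stack_of u) = 0"
proof (induction w arbitrary: u)
  case Nil
  then obtain l where "l \<in> set u" "snd l \<ge> 1" by (metis append_Nil2 last_in_set)
  then have "stack_of u \<noteq> []" unfolding stack_of_eq_Nil by fastforce
  then show ?case by simp
next
  case (Cons l w)
  obtain y m where l: "l = (y, m)" by fastforce
  have "\<not> reducible E (u @ [(y, m)])"
    using Cons.prems(1) reducible_append[of E "u @ [(y, m)]" w] l by auto
  then have no_pop: "pop E y (stack_of u) = None"
    using pop_stack_of_irreducible[OF assms] Cons.prems(2) by auto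
  have "stack_count E w (stack_of (u @ [(y, m)])) = 0"
    using Cons.IH[of "u @ [(y, m)]"] Cons.prems l by auto
  then have "(case pop_many E y b (stack_of u) of None \<Rightarrow> 0
      | Some r' \<Rightarrow> stack_count E w (replicate (m - b) y @ r')) = 0" for b
    using no_pop by (cases b) (simp_all add: stack_of_snoc)
  then show ?case unfolding l by simp
qed

section \<open>Functionals obeying the Chebyshev rules\<close>

text \<open>Relations satisfied by \<open>w \<mapsto> \<tau>(\<Prod>U\<^sub>m(s\<^sub>x))\<close>, the product running over the blocks
  \<open>(x, m)\<close> of \<open>w\<close>; \<open>irreducible\<close> is \<open>G\<close>-independence for the centred factors \<open>U\<^sub>m(s\<^sub>x)\<close>,
  \<open>m \<ge> 1\<close>.\<close>
locale chebyshev_rules =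
  fixes V :: "'v set" and E :: "'v \<Rightarrow> 'v \<Rightarrow> bool" and \<phi> :: "('v \<times> nat) list \<Rightarrow> 'c::ring_1"
  assumes empty: "\<phi> [] = 1"
    and zero_block: "fst ` set (u @ v) \<subseteq> V \<Longrightarrow> x \<in> V \<Longrightarrow> \<phi> (u @ (x, 0) # v) = \<phi> (u @ v)"
    and swap: "fst ` set (u @ v) \<subseteq> V \<Longrightarrow> x \<in> V \<Longrightarrow> y \<in> V \<Longrightarrow> E x y \<Longrightarrow>
      \<phi> (u @ (x, a) # (y, b) # v) = \<phi> (u @ (y, b) # (x, a) # v)"
    and merge: "fst ` set (u @ v) \<subseteq> V \<Longrightarrow> x \<in> V \<Longrightarrow>
      \<phi> (u @ (x, m) # (x, 1) # v) = \<phi> (u @ (x, Suc m) # v) + (if m = 0 then 0 else \<phi> (u @ (x, m - 1) # v))"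
    and irreducible: "fst ` set w \<subseteq> V \<Longrightarrow> w \<noteq> [] \<Longrightarrow> \<forall>l\<in>set w. 1 \<le> snd l \<Longrightarrow> \<not> reducible E w \<Longrightarrow>
      \<phi> w = 0"
begin

lemma move_left:
  assumes "symp E" "fst ` set (u @ c @ v) \<subseteq> V" "x \<in> V" "\<forall>l\<in>set c. E x (fst l)"
  shows "\<phi> (u @ c @ (x, b) # v) = \<phi> (u @ (x, b) # c @ v)"
  using assms(2,4)
proof (induction c arbitrary: u)
  case (Cons l c)
  obtain z k where l: "l = (z, k)" by fastforce
  have "E z x" using Cons.prems(2) l assms(1) by (auto dest: sympD)
  have "\<phi> (u @ (l # c) @ (x, b) # v) = \<phi> ((u @ [l]) @ (x, b) # c @ v)"
    using Cons.IH[of "u @ [l]"] Cons.prems by simp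
  also have "\<dots> = \<phi> (u @ (x, b) # l # c @ v)"
    using swap[of u "c @ v" z x k b] Cons.prems assms(3) \<open>E z x\<close> l by simp
  finally show ?case by simp
qed simp

end

lemma chebyshev_rules_merge_eq:
  assumes rules: "chebyshev_rules V E \<phi>\<^sub>1" "chebyshev_rules V E \<phi>\<^sub>2"
    and "fst ` set (u @ v) \<subseteq> V" "x \<in> V" "\<And>k. \<phi>\<^sub>1 (u @ (x, k) # v) = \<phi>\<^sub>2 (u @ (x, k) # v)"
  shows "\<phi>\<^sub>1 (u @ (x, a) # (x, b) # v) = \<phi>\<^sub>2 (u @ (x, a) # (x, b) # v)"
  using assms(3,5)
proof (induction b arbitrary: a v rule: less_induct)
  case (less b)
  interpret \<phi>\<^sub>1: chebyshev_rules V E \<phi>\<^sub>1 by (fact rules(1))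
  interpret \<phi>\<^sub>2: chebyshev_rules V E \<phi>\<^sub>2 by (fact rules(2))
  consider "b = 0" | "b = 1" | c where "b = Suc (Suc c)"
    by (metis One_nat_def not0_implies_Suc)
  then show ?case
  proof cases
    case 1
    then show ?thesis
      using less.prems \<phi>\<^sub>1.zero_block[of "u @ [(x, a)]" v x] \<phi>\<^sub>2.zero_block[of "u @ [(x, a)]" v x] assms(4)
      by simp
  next
    case 2
    then show ?thesis
      using less.prems \<phi>\<^sub>1.merge[of u v x a] \<phi>\<^sub>2.merge[of u v x a] assms(4) by simp
  next
    case 3
    have split: "\<phi> (u @ (x, a) # (x, b) # v)
        = \<phi> (u @ (x, a) # (x, Suc c) # (x, 1) # v) - \<phi> (u @ (x, a) # (x, c) # v)"
      if "chebyshev_rules V E \<phi>" for \<phi> :: "_ \<Rightarrow> 'b"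
      using chebyshev_rules.merge[OF that, of "u @ [(x, a)]" v x "Suc c"] less.prems(1) assms(4) 3
      by (simp add: eq_diff_eq)
    have "\<phi>\<^sub>1 (u @ (x, k) # (x, 1) # v) = \<phi>\<^sub>2 (u @ (x, k) # (x, 1) # v)" for k
      using \<phi>\<^sub>1.merge[of u v x k] \<phi>\<^sub>2.merge[of u v x k] less.prems assms(4) by simp
    then have "\<phi>\<^sub>1 (u @ (x, a) # (x, Suc c) # (x, 1) # v) = \<phi>\<^sub>2 (u @ (x, a) # (x, Suc c) # (x, 1) # v)"
      using less.IH[of "Suc c" "(x, 1) # v"] less.prems(1) assms(4) 3 by simp
    moreover have "\<phi>\<^sub>1 (u @ (x, a) # (x, c) # v) = \<phi>\<^sub>2 (u @ (x, a) # (x, c) # v)"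
      using less.IH[of c v] less.prems 3 by simp
    ultimately show ?thesis
      using split[OF rules(1)] split[OF rules(2)] by simp
  qed
qed

theorem chebyshev_rules_unique:
  assumes rules: "chebyshev_rules V E \<phi>\<^sub>1" "chebyshev_rules V E \<phi>\<^sub>2" and "symp E"
  shows "fst ` set w \<subseteq> V \<Longrightarrow> \<phi>\<^sub>1 w = \<phi>\<^sub>2 w"
proof (induction w rule: measure_induct_rule[where f = length])
  case (less w)
  interpret \<phi>\<^sub>1: chebyshev_rules V E \<phi>\<^sub>1 by (fact rules(1))
  interpret \<phi>\<^sub>2: chebyshev_rules V E \<phi>\<^sub>2 by (fact rules(2))
  consider (zero_block) u x v where "w = u @ (x, 0) # v"
    | (empty) "w = []"
    | (irreducible) "w \<noteq> []" "\<forall>l\<in>set w. 1 \<le> snd l" "\<not> reducible E w"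
    | (reducible) "reducible E w"
    by (metis less_one not_le prod.collapse split_list)
  then show ?case
  proof cases
    case zero_block
    then show ?thesis
      using less \<phi>\<^sub>1.zero_block[of u v x] \<phi>\<^sub>2.zero_block[of u v x] by simp
  next
    case empty
    then show ?thesis using \<phi>\<^sub>1.empty \<phi>\<^sub>2.empty by simp
  next
    case irreducible
    then show ?thesis using less.prems \<phi>\<^sub>1.irreducible \<phi>\<^sub>2.irreducible by simp
  next
    case reducible
    then obtain u x a c b v where w: "w = u @ (x, a) # c @ (x, b) # v" and c: "\<forall>l\<in>set c. E x (fst l)"
      unfolding reducible_def by blast
    have moved: "\<phi>\<^sub>i w = \<phi>\<^sub>i (u @ (x, a) # (x, b) # c @ v)"
      if "chebyshev_rules V E \<phi>\<^sub>i" for \<phi>\<^sub>i :: "_ \<Rightarrow> 'b"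
      using chebyshev_rules.move_left[OF that assms(3), of "u @ [(x, a)]" c v x b] less.prems w c by simp
    have "\<phi>\<^sub>1 (u @ (x, k) # c @ v) = \<phi>\<^sub>2 (u @ (x, k) # c @ v)" for k
      using less.IH less.prems w by simp
    then have "\<phi>\<^sub>1 (u @ (x, a) # (x, b) # c @ v) = \<phi>\<^sub>2 (u @ (x, a) # (x, b) # c @ v)"
      using chebyshev_rules_merge_eq[OF rules, of u "c @ v" x] less.prems w by simp
    then show ?thesis using moved[OF rules(1)] moved[OF rules(2)] by simp
  qed
qed

lemma chebyshev_rules_stack_count:
  assumes "symp E" "irreflp E"
  shows "chebyshev_rules V E (\<lambda>w. of_nat (stack_count E w []))"
proof
  fix u v :: "('a \<times> nat) list" and x
  show "of_nat (stack_count E (u @ (x, 0) # v) []) = of_nat (stack_count E (u @ v) [])"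
    using stack_count_append_cong[of E "(x, 0) # v" v u "[]"] by simp
  fix y a b
  assume "E x y"
  moreover have "x \<noteq> y" using \<open>E x y\<close> assms(2) by (auto dest: irreflpD)
  ultimately have "stack_count E ((y, b) # (x, a) # v) r = stack_count E ((x, a) # (y, b) # v) r" for r
    by (rule stack_count_swap[OF assms(1)])
  then show "of_nat (stack_count E (u @ (x, a) # (y, b) # v) []) = of_nat (stack_count E (u @ (y, b) # (x, a) # v) [])"
    by (metis stack_count_append_cong)
next
  fix u v :: "('a \<times> nat) list" and x m
  show "of_nat (stack_count E (u @ (x, m) # (x, 1) # v) []) =
    of_nat (stack_count E (u @ (x, Suc m) # v) []) + (if m = 0 then 0 else of_nat (stack_count E (u @ (x, m - 1) # v) []))"
  proof (cases "m = 0")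
    case True
    then have "stack_count E ((x, m) # (x, 1) # v) r = stack_count E ((x, Suc m) # v) r" for r
      using stack_count_merge[of E x m v r] by (simp del: stack_count.simps)
    from stack_count_append_cong[OF this, of u "[]"] True show ?thesis by simp
  next
    case False
    then have "stack_count E ((x, m) # (x, 1) # v) r
        = stack_count E ((x, Suc m) # v) r + stack_count E ((x, m - 1) # v) r" for r
      using stack_count_merge[of E x m v r] by (simp del: stack_count.simps)
    from stack_count_append_add[OF this, of u "[]"] False show ?thesis by simp
  qed
next
  fix w :: "('a \<times> nat) list"
  assume "w \<noteq> []" "\<forall>l\<in>set w. 1 \<le> snd l" "\<not> reducible E w"
  then show "of_nat (stack_count E w []) = 0"
    using stack_count_irreducible[OF assms(1), of "[]" w] by (simp add: stack_of_def)
qed simp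

section \<open>Weighted stack counts\<close>

definition words :: "'v set \<Rightarrow> nat \<Rightarrow> 'v list set" where
  "words V n = {xs. set xs \<subseteq> V \<and> length xs = n}"

lemma words_0 [simp]: "words V 0 = {[]}"
  unfolding words_def by auto

lemma sum_words_Suc: "(\<Sum>xs\<in>words V (Suc n). f xs) = (\<Sum>y\<in>V. \<Sum>xs\<in>words V n. f (y # xs))"
proof -
  have "words V (Suc n) = (\<lambda>(y, xs). y # xs) ` (V \<times> words V n)"
    unfolding words_def by (auto simp: length_Suc_conv image_iff)
  moreover have "inj_on (\<lambda>(y, xs). y # xs) (V \<times> words V n)"
    by (auto simp: inj_on_def)
  ultimately show ?thesis
    by (simp add: sum.reindex sum.cartesian_product case_prod_beta')
qed

fun weighted_count :: "'v set \<Rightarrow> ('v \<Rightarrow> 'v \<Rightarrow> bool) \<Rightarrow> ('v \<Rightarrow> real) \<Rightarrow> nat \<Rightarrow> 'v list \<Rightarrow> real" where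
  "weighted_count V E a 0 r = (if r = [] then 1 else 0)"
| "weighted_count V E a (Suc n) r = (\<Sum>y\<in>V. a y * (weighted_count V E a n (y # r) +
      (case pop E y r of None \<Rightarrow> 0 | Some r' \<Rightarrow> weighted_count V E a n r')))"

lemma stack_count_unit_block:
  "stack_count E ((y, 1) # w) r = stack_count E w (y # r) + (case pop E y r of None \<Rightarrow> 0 | Some r' \<Rightarrow> stack_count E w r')"
  by (simp add: atMost_Suc split: option.split)

lemma weighted_count_eq_sum:
  "weighted_count V E a n r = (\<Sum>xs\<in>words V n. prod_list (map a xs) * real (stack_count E (map (\<lambda>y. (y, 1)) xs) r))"
proof (induction n arbitrary: r)
  case (Suc n)
  let ?f = "\<lambda>xs r. prod_list (map a xs) * real (stack_count E (map (\<lambda>y. (y, 1)) xs) r)"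
  have "weighted_count V E a (Suc n) r = (\<Sum>y\<in>V. \<Sum>xs\<in>words V n.
      a y * (?f xs (y # r) + (case pop E y r of None \<Rightarrow> 0 | Some r' \<Rightarrow> ?f xs r')))"
    unfolding weighted_count.simps
    by (intro sum.cong refl) (simp add: Suc.IH sum_distrib_left sum.distrib distrib_left split: option.split)
  also have "\<dots> = (\<Sum>xs\<in>words V (Suc n). ?f xs r)"
    unfolding sum_words_Suc
    by (intro sum.cong refl)
      (simp add: stack_count_unit_block[unfolded One_nat_def] algebra_simps del: stack_count.simps
        split: option.split)
  finally show ?case .
qed simp

lemma pop_length: "pop E y r = Some r' \<Longrightarrow> length r = Suc (length r')"
  by (induction E y r arbitrary: r' rule: pop.induct) (auto split: if_splits)

lemma pop_set: "pop E y r = Some r' \<Longrightarrow> y \<in> set r \<and> set r' \<subseteq> set r"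
  by (induction E y r arbitrary: r' rule: pop.induct) (auto split: if_splits)

lemma pop_prod_list:
  fixes f :: "'v \<Rightarrow> 'a::comm_monoid_mult"
  shows "pop E y r = Some r' \<Longrightarrow> prod_list (map f r) = f y * prod_list (map f r')"
  by (induction E y r arbitrary: r' rule: pop.induct) (auto simp: ac_simps split: if_splits)

lemma weighted_count_eq_0: "length r > n \<Longrightarrow> weighted_count V E a n r = 0"
proof (induction n arbitrary: r)
  case (Suc n)
  have "(case pop E y r of None \<Rightarrow> 0 | Some r' \<Rightarrow> weighted_count V E a n r') = 0" for y
    using Suc by (auto dest: pop_length split: option.split)
  with Suc show ?case by simp
qed simp

definition poppable :: "'v set \<Rightarrow> ('v \<Rightarrow> 'v \<Rightarrow> bool) \<Rightarrow> 'v list \<Rightarrow> 'v set" where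
  "poppable V E r = {y \<in> V. pop E y r \<noteq> None}"

lemma poppable_subset: "poppable V E r \<subseteq> set r"
  unfolding poppable_def using pop_set by fastforce

lemma poppable_adjacent:
  assumes "symp E" "y \<in> poppable V E r" "y' \<in> poppable V E r" "y \<noteq> y'"
  shows "E y y'"
  using assms(2-)
proof (induction r)
  case (Cons z r)
  then show ?case
    using assms(1) by (auto simp: poppable_def split: if_splits dest: sympD)
qed (simp add: poppable_def)

lemma sum_divide_le_if_card_le:
  fixes c :: "'v \<Rightarrow> real"
  assumes "finite S" "0 \<le> X" "\<And>y. y \<in> S \<Longrightarrow> real (card S) \<le> c y"
  shows "(\<Sum>y\<in>S. X / c y) \<le> X"
proof (cases "S = {}")
  case False
  then have card: "real (card S) > 0" using assms(1) by (simp add: card_gt_0_iff)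
  have "X / c y \<le> X / real (card S)" if "y \<in> S" for y
  proof -
    have "0 < c y" using card assms(3)[OF that] by linarith
    then show ?thesis using assms(2) assms(3)[OF that] card by (intro divide_left_mono) auto
  qed
  then have "(\<Sum>y\<in>S. X / c y) \<le> (\<Sum>y\<in>S. X / real (card S))"
    by (rule sum_mono)
  also have "\<dots> = X" using card by simp
  finally show ?thesis .
qed (simp add: assms(2))

locale stack_weights =
  fixes V :: "'v set" and E :: "'v \<Rightarrow> 'v \<Rightarrow> bool" and a c :: "'v \<Rightarrow> real"
  assumes sym: "symp E" and finite: "finite V"
    and a_nonneg: "0 \<le> a y" and c_pos: "y \<in> V \<Longrightarrow> 0 < c y"
begin

definition radius :: real where
  "radius = sqrt (\<Sum>y\<in>V. c y * a y ^ 2)"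

lemma sum_weights_nonneg: "0 \<le> (\<Sum>y\<in>V. c y * a y ^ 2)"
  using c_pos by (intro sum_nonneg) (simp add: less_imp_le)

lemma radius_nonneg: "0 \<le> radius"
  unfolding radius_def using sum_weights_nonneg by simp

lemma radius_square: "radius^2 = (\<Sum>y\<in>V. c y * a y ^ 2)"
  unfolding radius_def using sum_weights_nonneg by simp

definition weight :: "'v list \<Rightarrow> real" where
  "weight r = (\<Prod>u\<leftarrow>r. c u * a u)"

definition bound :: "nat \<Rightarrow> 'v list \<Rightarrow> real" where
  "bound n r = real (dyck_paths n (length r)) * radius ^ (n - length r) * weight r"

lemma weight_nonneg: "set r \<subseteq> V \<Longrightarrow> 0 \<le> weight r"
  unfolding weight_def
  by (induction r) (auto intro!: mult_nonneg_nonneg simp: a_nonneg c_pos less_imp_le)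

lemma bound_nonneg: "set r \<subseteq> V \<Longrightarrow> 0 \<le> bound n r"
  unfolding bound_def using weight_nonneg radius_nonneg by simp

lemma push_sum:
  "(\<Sum>y\<in>V. a y * bound n (y # r)) = real (dyck_paths n (Suc (length r))) * radius ^ (Suc n - length r) * weight r"
proof (cases "Suc (length r) \<le> n")
  case True
  have "(\<Sum>y\<in>V. a y * bound n (y # r))
      = real (dyck_paths n (Suc (length r))) * radius ^ (n - Suc (length r)) * weight r * radius^2"
    unfolding bound_def weight_def radius_square
    by (simp add: sum_distrib_left power2_eq_square algebra_simps)
  also have "\<dots> = real (dyck_paths n (Suc (length r))) * radius ^ (Suc n - length r) * weight r"
  proof -
    have "Suc n - length r = n - Suc (length r) + 2" using True by simp
    then show ?thesis by (simp add: power_add power2_eq_square)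
  qed
  finally show ?thesis .
qed (simp add: bound_def dyck_paths_eq_0)

lemma pop_term:
  assumes "pop E y r = Some r'" "y \<in> V"
  shows "a y * bound n r' = real (dyck_paths n (length r - 1)) * radius ^ (Suc n - length r) * weight r / c y"
  using pop_length[OF assms(1)] pop_prod_list[OF assms(1), of "\<lambda>u. c u * a u"] c_pos[OF assms(2)]
  unfolding bound_def weight_def by simp

lemma pop_sum_le:
  assumes IH: "\<And>r'. set r' \<subseteq> V \<Longrightarrow> length r = Suc (length r') \<Longrightarrow> weighted_count V E a n r' \<le> bound n r'"
    and "set r \<subseteq> V"
  shows "(\<Sum>y\<in>V. a y * (case pop E y r of None \<Rightarrow> 0 | Some r' \<Rightarrow> weighted_count V E a n r'))
    \<le> (\<Sum>y\<in>poppable V E r. real (dyck_paths n (length r - 1)) * radius ^ (Suc n - length r) * weight r / c y)"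
    (is "_ \<le> (\<Sum>y\<in>_. ?X / c y)")
proof -
  have "(\<Sum>y\<in>V. a y * (case pop E y r of None \<Rightarrow> 0 | Some r' \<Rightarrow> weighted_count V E a n r'))
      \<le> (\<Sum>y\<in>V. if pop E y r \<noteq> None then ?X / c y else 0)"
  proof (rule sum_mono)
    fix y assume "y \<in> V"
    show "a y * (case pop E y r of None \<Rightarrow> 0 | Some r' \<Rightarrow> weighted_count V E a n r')
      \<le> (if pop E y r \<noteq> None then ?X / c y else 0)"
    proof (cases "pop E y r")
      case (Some r')
      have "a y * weighted_count V E a n r' \<le> a y * bound n r'"
        using IH pop_length[OF Some] pop_set[OF Some] assms(2) a_nonneg
        by (intro mult_left_mono) auto
      with Some pop_term[OF Some \<open>y \<in> V\<close>] show ?thesis by simp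
    qed simp
  qed
  also have "\<dots> = (\<Sum>y\<in>poppable V E r. ?X / c y)"
    unfolding poppable_def sum.inter_filter[OF finite] by (rule refl)
  finally show ?thesis .
qed

lemma poppable_sum_le:
  assumes "finite V" "0 \<le> X" "\<And>y. y \<in> poppable V E r \<Longrightarrow> real (card (poppable V E r)) \<le> c y"
  shows "(\<Sum>y\<in>poppable V E r. X / c y) \<le> (if r = [] then 0 else X)"
proof (cases "r = []")
  case True
  then show ?thesis using poppable_subset[of V E r] by simp
next
  case False
  have "finite (poppable V E r)" using assms(1) unfolding poppable_def by simp
  from sum_divide_le_if_card_le[OF this assms(2,3)] False show ?thesis by simp
qed

text \<open>Pushing \<open>y\<close> multiplies the weight of the stack by \<open>c y * a y\<close>, which sums to \<open>radius\<^sup>2\<close> over \<open>y\<close>;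
  popping \<open>y\<close> divides it by \<open>c y * a y\<close>, and the hypothesis on \<open>c\<close> bounds the sum of \<open>1 / c y\<close>
  over the poppable letters by one. The recursion of \<open>dyck_paths\<close> then carries the bound through
  the recursion of \<open>weighted_count\<close>.\<close>
lemma weighted_count_le_bound:
  assumes clique: "\<And>r y. set r \<subseteq> V \<Longrightarrow> length r \<le> K \<Longrightarrow> y \<in> poppable V E r \<Longrightarrow>
      real (card (poppable V E r)) \<le> c y"
  shows "set r \<subseteq> V \<Longrightarrow> length r + n \<le> 2 * K \<Longrightarrow> weighted_count V E a n r \<le> bound n r"
proof (induction n arbitrary: r)
  case 0
  then show ?case using weight_nonneg by (simp add: bound_def weight_def)
next
  case (Suc n)
  show ?case
  proof (cases "length r \<le> Suc n")
    case False
    then show ?thesis using bound_nonneg[OF Suc.prems(1)] weighted_count_eq_0[of "Suc n" r]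
      by (simp del: weighted_count.simps)
  next
    case True
    define X where "X = real (dyck_paths n (length r - 1)) * radius ^ (Suc n - length r) * weight r"
    have "X \<ge> 0" unfolding X_def using weight_nonneg[OF Suc.prems(1)] radius_nonneg by simp
    have push: "(\<Sum>y\<in>V. a y * weighted_count V E a n (y # r)) \<le> (\<Sum>y\<in>V. a y * bound n (y # r))"
      using Suc a_nonneg by (intro sum_mono mult_left_mono) auto
    have "length r \<le> K" using True Suc.prems(2) by simp
    with poppable_sum_le[OF finite \<open>X \<ge> 0\<close>] clique Suc.prems(1)
    have "(\<Sum>y\<in>poppable V E r. X / c y) \<le> (if r = [] then 0 else X)" by blast
    with pop_sum_le[OF Suc.IH Suc.prems(1)] Suc.prems
    have pop: "(\<Sum>y\<in>V. a y * (case pop E y r of None \<Rightarrow> 0 | Some r' \<Rightarrow> weighted_count V E a n r'))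
        \<le> (if r = [] then 0 else X)"
      unfolding X_def by fastforce
    have "weighted_count V E a (Suc n) r
        = (\<Sum>y\<in>V. a y * weighted_count V E a n (y # r))
          + (\<Sum>y\<in>V. a y * (case pop E y r of None \<Rightarrow> 0 | Some r' \<Rightarrow> weighted_count V E a n r'))"
      by (simp add: distrib_left sum.distrib)
    also have "\<dots> \<le> (\<Sum>y\<in>V. a y * bound n (y # r)) + (if r = [] then 0 else X)"
      using add_mono[OF push pop] .
    also have "\<dots> = bound (Suc n) r"
      unfolding push_sum unfolding X_def bound_def by (simp add: algebra_simps)
    finally show ?thesis .
  qed
qed

lemma weighted_count_le_catalan:
  assumes "\<And>r y. set r \<subseteq> V \<Longrightarrow> length r \<le> K \<Longrightarrow> y \<in> poppable V E r \<Longrightarrow>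
      real (card (poppable V E r)) \<le> c y"
  shows "weighted_count V E a (2 * K) [] \<le> catalan K * (\<Sum>y\<in>V. c y * a y ^ 2) ^ K"
proof -
  have "weighted_count V E a (2 * K) [] \<le> bound (2 * K) []"
    using weighted_count_le_bound[of K, OF assms] by simp
  also have "\<dots> = catalan K * (\<Sum>y\<in>V. c y * a y ^ 2) ^ K"
    unfolding bound_def weight_def radius_square[symmetric] by (simp add: power_mult dyck_paths_catalan)
  finally show ?thesis .
qed

end

section \<open>Tracial C*-algebras\<close>

locale tracial_cstar =
  fixes smul :: "complex \<Rightarrow> 'a::{real_normed_algebra_1,banach} \<Rightarrow> 'a"
    and star :: "'a \<Rightarrow> 'a" and tau :: "'a \<Rightarrow> complex"
  assumes cstar_tracial_space: "cstar_tracial_space smul star tau"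
begin

lemma smul_of_real: "smul (complex_of_real r) x = r *\<^sub>R x"
  using cstar_tracial_space unfolding cstar_tracial_space_def by simp

lemma smul_smul: "smul (c * d) x = smul c (smul d x)"
  using cstar_tracial_space unfolding cstar_tracial_space_def by simp

lemma smul_mult_left: "smul c (x * y) = smul c x * y"
  using cstar_tracial_space unfolding cstar_tracial_space_def by simp

lemma smul_mult_right: "smul c (x * y) = x * smul c y"
  using cstar_tracial_space unfolding cstar_tracial_space_def by (elim conjE) blast

lemma tau_add: "tau (x + y) = tau x + tau y"
  using cstar_tracial_space unfolding cstar_tracial_space_def by simp

lemma tau_smul: "tau (smul c x) = c * tau x"
  using cstar_tracial_space unfolding cstar_tracial_space_def by simp

lemma tau_one: "tau 1 = 1"
  using cstar_tracial_space unfolding cstar_tracial_space_def by simp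

lemma star_add: "star (x + y) = star x + star y"
  using cstar_tracial_space unfolding cstar_tracial_space_def by simp

lemma star_smul: "star (smul c x) = smul (cnj c) (star x)"
  using cstar_tracial_space unfolding cstar_tracial_space_def by simp

lemma star_mult: "star (x * y) = star y * star x"
  using cstar_tracial_space unfolding cstar_tracial_space_def by simp

lemma star_star: "star (star x) = x"
  using cstar_tracial_space unfolding cstar_tracial_space_def by simp

lemma Re_tau_star_mult_nonneg: "0 \<le> Re (tau (star x * x))"
proof -
  have "\<forall>x. Im (tau (star x * x)) = 0 \<and> 0 \<le> Re (tau (star x * x))"
    using cstar_tracial_space unfolding cstar_tracial_space_def by (elim conjE)
  then show ?thesis by blast
qed

lemma smul_one: "smul 1 x = x"
  using smul_of_real[of 1 x] by simp

lemma smul_mult_smul: "smul c x * smul d y = smul (c * d) (x * y)"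
proof -
  have "smul c x * smul d y = smul c (x * smul d y)" by (rule smul_mult_left[symmetric])
  also have "\<dots> = smul (c * d) (x * y)" by (simp add: smul_mult_right smul_smul)
  finally show ?thesis .
qed

lemma tau_zero: "tau 0 = 0"
  using tau_add[of 0 0] by simp

lemma tau_sum: "tau (\<Sum>i\<in>I. f i) = (\<Sum>i\<in>I. tau (f i))"
  by (induction I rule: infinite_finite_induct) (auto simp: tau_zero tau_add)

lemma tau_of_nat_mult: "tau (of_nat n * x) = of_nat n * tau x"
  using tau_smul[of "of_nat n" x] smul_of_real[of "real n" x] by (simp add: scaleR_conv_of_real)

lemma star_zero: "star 0 = 0"
  using star_add[of 0 0] by simp

lemma star_sum: "star (\<Sum>i\<in>I. f i) = (\<Sum>i\<in>I. star (f i))"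
  by (induction I rule: infinite_finite_induct) (auto simp: star_zero star_add)

lemma star_one: "star 1 = 1"
  using star_mult[of "star 1" 1] by (simp add: star_star)

lemma star_power: "star (x ^ n) = star x ^ n"
  by (induction n) (simp_all add: star_one star_mult power_commutes)

lemma Re_tau_power_mult_star_nonneg: "0 \<le> Re (tau ((u * star u) ^ p))"
proof -
  define v where "v = u * star u"
  have v: "star v = v" unfolding v_def by (simp add: star_mult star_star)
  obtain k where "p = 2 * k \<or> p = 2 * k + 1" by (metis oddE evenE)
  then have "v ^ p = star (v ^ k) * v ^ k \<or> v ^ p = star (star u * v ^ k) * (star u * v ^ k)"
  proof
    assume "p = 2 * k"
    then show ?thesis by (simp add: star_power v power_add[symmetric] mult_2)
  next
    assume "p = 2 * k + 1"
    then have "v ^ p = v ^ (k + 1 + k)" by (simp add: mult_2)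
    also have "\<dots> = v ^ k * v * v ^ k" by (simp only: power_add power_one_right)
    finally have "v ^ p = v ^ k * u * (star u * v ^ k)"
      unfolding v_def by (simp add: mult.assoc)
    then show ?thesis by (simp add: star_mult star_star star_power v)
  qed
  then show ?thesis unfolding v_def using Re_tau_star_mult_nonneg by metis
qed

lemma chebyshev_U_mem_gen_star_alg: "chebyshev_U s m \<in> gen_star_alg smul star s"
proof (induction s m rule: chebyshev_U.induct)
  case (3 s m)
  have "chebyshev_U s (Suc (Suc m)) = s * chebyshev_U s (Suc m) + smul (-1) (chebyshev_U s m)"
    using smul_of_real[of "-1"] by simp
  also have "\<dots> \<in> gen_star_alg smul star s"
    using 3 by (intro gen_star_alg.add gen_star_alg.mult gen_star_alg.scale gen_star_alg.gen)
  finally show ?case .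
qed (auto intro: gen_star_alg.intros)

lemma tau_power_semicircle: "semicircle_var star tau s \<Longrightarrow> tau (s ^ k) = of_nat (dyck_paths k 0)"
  unfolding semicircle_var_def semicircle_moment by simp

text \<open>In the expansion of \<open>s\<^sup>m\<close> into the \<open>U\<^sub>j\<close>, the trace of every \<open>U\<^sub>j\<close> with \<open>0 < j < m\<close>
  vanishes by induction, and the \<open>U\<^sub>0\<close> term alone already accounts for \<open>\<tau>(s\<^sup>m)\<close>.\<close>
lemma tau_chebyshev_U:
  assumes "semicircle_var star tau s"
  shows "1 \<le> m \<Longrightarrow> tau (chebyshev_U s m) = 0"
proof (induction m rule: less_induct)
  case (less m)
  define f where "f j = of_nat (dyck_paths m j) * tau (chebyshev_U s j)" for j
  have "(\<Sum>j\<in>{..m} - {0, m}. f j) = 0"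
    using less.IH unfolding f_def by (intro sum.neutral) auto
  moreover have "tau (s ^ m) = (\<Sum>j\<le>m. f j)"
    unfolding f_def by (simp add: power_eq_sum_chebyshev_U[of s m] tau_sum tau_of_nat_mult)
  moreover have "(\<Sum>j\<le>m. f j) = f 0 + f m + (\<Sum>j\<in>{..m} - {0, m}. f j)"
    using less.prems by (simp add: sum.remove[of "{..m}" 0] sum.remove[of "{..m} - {0}" m]
        insert_Diff_if Diff_insert2[symmetric])
  ultimately show ?case
    using tau_power_semicircle[OF assms, of m] tau_one unfolding f_def by simp
qed

lemma expand_product:
  "prod_list (map (\<lambda>c. \<Sum>i\<in>V. smul (c i) (s i)) cs) =
   (\<Sum>xs\<in>words V (length cs). smul (prod_list (map2 (\<lambda>c i. c i) cs xs)) (prod_list (map s xs)))"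
proof (induction cs)
  case Nil
  then show ?case by (simp add: smul_one)
next
  case (Cons c cs)
  then show ?case
    by (simp add: sum_words_Suc sum_distrib_left sum_distrib_right smul_mult_smul
        sum.swap[of _ "words V (length cs)"])
qed

end

section \<open>G-independent semicircle families\<close>

lemma simple_graph_symp: "simple_graph L E \<Longrightarrow> symp E"
  unfolding simple_graph_def by (blast intro: sympI)

lemma simple_graph_irreflp: "simple_graph L E \<Longrightarrow> irreflp E"
  unfolding simple_graph_def by (blast intro: irreflpI)

lemma card_le_max_clique_at:
  assumes "is_clique L E C" "y \<in> C"
  shows "card C \<le> max_clique_at L E y"
proof -
  have "{card C | C. is_clique L E C \<and> y \<in> C} \<subseteq> card ` Pow {1..L}"
    unfolding is_clique_def by auto
  then have "finite {card C | C. is_clique L E C \<and> y \<in> C}"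
    by (rule finite_subset) simp
  then show ?thesis unfolding max_clique_at_def using assms by (intro Max_ge) auto
qed

lemma max_clique_at_pos: "y \<in> {1..L} \<Longrightarrow> 1 \<le> max_clique_at L E y"
  using card_le_max_clique_at[of L E "{y}" y] unfolding is_clique_def by auto

lemma max_clique_at_le_clique_number:
  assumes "y \<in> {1..L}"
  shows "max_clique_at L E y \<le> clique_number L E"
proof -
  have "{card C | C. is_clique L E C} \<subseteq> card ` Pow {1..L}"
    unfolding is_clique_def by auto
  then have "finite {card C | C. is_clique L E C}"
    by (rule finite_subset) simp
  moreover have "is_clique L E {y}" using assms unfolding is_clique_def by auto
  ultimately show ?thesis
    unfolding max_clique_at_def clique_number_def by (intro Max_mono) blast+
qed

lemma poppable_is_clique:
  assumes "symp E"
  shows "is_clique L E (poppable {1..L} E r)"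
proof -
  have "poppable {1..L} E r \<subseteq> {1..L}" by (auto simp: poppable_def)
  with poppable_adjacent[OF assms] show ?thesis unfolding is_clique_def by blast
qed

lemma norm_prod_list_map2:
  assumes "\<forall>c\<in>set cs. \<forall>i. cmod (c i) = a i"
  shows "length xs = length cs \<Longrightarrow> cmod (prod_list (map2 (\<lambda>c i. c i) cs xs)) = prod_list (map a xs)"
  using assms
proof (induction cs arbitrary: xs)
  case (Cons c cs)
  then obtain x xs' where "xs = x # xs'" by (cases xs) auto
  with Cons show ?case by (simp add: norm_mult)
qed simp

lemma prod_list_concat_replicate: "prod_list (concat (replicate p [x, y])) = ((x::'a::monoid_mult) * y) ^ p"
  by (induction p) (simp_all add: mult.assoc power_commutes)

lemma powr_inverse_double_le:
  fixes X C m :: real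
  assumes "1 \<le> p" "0 \<le> X" "X \<le> C * m ^ p" "0 \<le> C" "0 \<le> m"
  shows "X powr (1 / (2 * real p)) \<le> C powr (1 / (2 * real p)) * sqrt m"
proof -
  have "X powr (1 / (2 * real p)) \<le> (C * m ^ p) powr (1 / (2 * real p))"
    using assms by (intro powr_mono2) auto
  also have "\<dots> = C powr (1 / (2 * real p)) * (m ^ p) powr (1 / (2 * real p))"
    by (rule powr_mult)
  also have "(m ^ p) powr (1 / (2 * real p)) = sqrt m"
  proof (cases "m = 0")
    case False
    then have "(m ^ p) powr (1 / (2 * real p)) = m powr (1 / 2)"
      using assms by (simp add: powr_realpow[symmetric] powr_powr)
    then show ?thesis using assms by (simp add: powr_half_sqrt)
  qed (use assms in simp)
  finally show ?thesis .
qed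

locale G_semicircle_family = tracial_cstar smul star tau
  for smul :: "complex \<Rightarrow> 'a::{real_normed_algebra_1,banach} \<Rightarrow> 'a" and star tau +
  fixes L :: nat and E :: "nat \<Rightarrow> nat \<Rightarrow> bool" and s :: "nat \<Rightarrow> 'a"
  assumes graph: "simple_graph L E"
    and semicircle: "i \<in> {1..L} \<Longrightarrow> semicircle_var star tau (s i)"
    and independent: "G_independent L E tau (\<lambda>i. gen_star_alg smul star (s i))"
begin

definition trace_blocks :: "(nat \<times> nat) list \<Rightarrow> complex" where
  "trace_blocks w = tau (prod_list (map (\<lambda>(x, m). chebyshev_U (s x) m) w))"

lemma chebyshev_U_commute_adjacent:
  assumes "x \<in> {1..L}" "y \<in> {1..L}" "E x y"
  shows "chebyshev_U (s x) a * chebyshev_U (s y) b = chebyshev_U (s y) b * chebyshev_U (s x) a"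
  using independent assms chebyshev_U_mem_gen_star_alg unfolding G_independent_def by blast

lemma tau_prod_centered:
  assumes "1 \<le> k" "\<forall>j<k. idx j \<in> {1..L}"
    and "\<forall>j1 j2. j1 < j2 \<and> j2 < k \<and> idx j1 = idx j2 \<longrightarrow> (\<exists>j3. j1 < j3 \<and> j3 < j2 \<and> \<not> E (idx j1) (idx j3))"
    and "\<forall>j<k. f j \<in> gen_star_alg smul star (s (idx j)) \<and> tau (f j) = 0"
  shows "tau (prod_list (map f [0..<k])) = 0"
proof -
  have "\<forall>k idx f. 1 \<le> k \<longrightarrow> (\<forall>j<k. idx j \<in> {1..L}) \<longrightarrow>
      (\<forall>j1 j2. j1 < j2 \<and> j2 < k \<and> idx j1 = idx j2 \<longrightarrow> (\<exists>j3. j1 < j3 \<and> j3 < j2 \<and> \<not> E (idx j1) (idx j3))) \<longrightarrow>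
      (\<forall>j<k. f j \<in> gen_star_alg smul star (s (idx j)) \<and> tau (f j) = 0) \<longrightarrow>
      tau (prod_list (map f [0..<k])) = 0"
    using independent unfolding G_independent_def by (rule conjunct2)
  with assms show ?thesis by blast
qed

lemma trace_blocks_irreducible:
  assumes "fst ` set w \<subseteq> {1..L}" "w \<noteq> []" "\<forall>l\<in>set w. 1 \<le> snd l" "\<not> reducible E w"
  shows "trace_blocks w = 0"
proof -
  define idx where "idx j = fst (w ! j)" for j
  define f where "f j = chebyshev_U (s (idx j)) (snd (w ! j))" for j
  have nth: "idx j \<in> {1..L} \<and> 1 \<le> snd (w ! j)" if "j < length w" for j
    using nth_mem[OF that] assms(1,3) unfolding idx_def by blast
  have "tau (prod_list (map f [0..<length w])) = 0"
  proof (rule tau_prod_centered)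
    show "1 \<le> length w" using assms(2) by (simp add: Suc_le_eq)
    show "\<forall>j<length w. idx j \<in> {1..L}" using nth by blast
    show "\<forall>j1 j2. j1 < j2 \<and> j2 < length w \<and> idx j1 = idx j2 \<longrightarrow>
        (\<exists>j3. j1 < j3 \<and> j3 < j2 \<and> \<not> E (idx j1) (idx j3))"
      using not_reducible_nth[OF assms(4)] unfolding idx_def by blast
    show "\<forall>j<length w. f j \<in> gen_star_alg smul star (s (idx j)) \<and> tau (f j) = 0"
    proof (intro allI impI conjI)
      fix j assume "j < length w"
      then have "idx j \<in> {1..L}" "1 \<le> snd (w ! j)" using nth by auto
      show "f j \<in> gen_star_alg smul star (s (idx j))"
        unfolding f_def by (rule chebyshev_U_mem_gen_star_alg)
      show "tau (f j) = 0"
        unfolding f_def by (rule tau_chebyshev_U[OF semicircle]) fact+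
    qed
  qed
  moreover have "map f [0..<length w] = map (\<lambda>(x, m). chebyshev_U (s x) m) (map (nth w) [0..<length w])"
    unfolding f_def idx_def by (simp add: case_prod_beta)
  then have "map f [0..<length w] = map (\<lambda>(x, m). chebyshev_U (s x) m) w"
    by (simp only: map_nth)
  ultimately show ?thesis unfolding trace_blocks_def by simp
qed

lemma chebyshev_rules_trace_blocks: "chebyshev_rules {1..L} E trace_blocks"
proof
  show "trace_blocks [] = 1" unfolding trace_blocks_def by (simp add: tau_one)
next
  fix u v :: "(nat \<times> nat) list" and x
  show "trace_blocks (u @ (x, 0) # v) = trace_blocks (u @ v)"
    unfolding trace_blocks_def by simp
  fix y a b
  assume "fst ` set (u @ v) \<subseteq> {1..L}" "x \<in> {1..L}" "y \<in> {1..L}" "E x y"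
  then have "chebyshev_U (s x) a * (chebyshev_U (s y) b * P) = chebyshev_U (s y) b * (chebyshev_U (s x) a * P)"
    for P
    using chebyshev_U_commute_adjacent[of x y a b] by (simp add: mult.assoc[symmetric])
  then show "trace_blocks (u @ (x, a) # (y, b) # v) = trace_blocks (u @ (y, b) # (x, a) # v)"
    unfolding trace_blocks_def by simp
next
  fix u v :: "(nat \<times> nat) list" and x m
  define P Q where "P = prod_list (map (\<lambda>(x, m). chebyshev_U (s x) m) u)"
    and "Q = prod_list (map (\<lambda>(x, m). chebyshev_U (s x) m) v)"
  have "chebyshev_U (s x) m * s x = chebyshev_U (s x) (Suc m) + (if m = 0 then 0 else chebyshev_U (s x) (m - 1))"
    by (simp flip: chebyshev_U_commute add: mult_chebyshev_U)
  then have "trace_blocks (u @ (x, m) # (x, 1) # v) =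
      tau (P * (chebyshev_U (s x) (Suc m) * Q)) + (if m = 0 then 0 else tau (P * (chebyshev_U (s x) (m - 1) * Q)))"
    unfolding trace_blocks_def P_def Q_def
    by (simp add: mult.assoc[symmetric] distrib_left distrib_right tau_add tau_zero)
  then show "trace_blocks (u @ (x, m) # (x, 1) # v) =
      trace_blocks (u @ (x, Suc m) # v) + (if m = 0 then 0 else trace_blocks (u @ (x, m - 1) # v))"
    unfolding trace_blocks_def P_def Q_def by simp
next
  fix w :: "(nat \<times> nat) list"
  assume "fst ` set w \<subseteq> {1..L}" "w \<noteq> []" "\<forall>l\<in>set w. 1 \<le> snd l" "\<not> reducible E w"
  then show "trace_blocks w = 0" by (rule trace_blocks_irreducible)
qed

theorem tau_word:
  assumes "set xs \<subseteq> {1..L}"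
  shows "tau (prod_list (map s xs)) = of_nat (stack_count E (map (\<lambda>i. (i, 1)) xs) [])"
proof -
  have "trace_blocks (map (\<lambda>i. (i, 1)) xs) = of_nat (stack_count E (map (\<lambda>i. (i, 1)) xs) [])"
    using chebyshev_rules_unique[OF chebyshev_rules_trace_blocks chebyshev_rules_stack_count
        simple_graph_symp[OF graph]] simple_graph_irreflp[OF graph] simple_graph_symp[OF graph] assms
    by (simp add: image_image)
  then show ?thesis unfolding trace_blocks_def by (simp add: comp_def)
qed

lemma star_linear_combination:
  "star (\<Sum>i=1..L. smul (\<alpha> i) (s i)) = (\<Sum>i=1..L. smul (cnj (\<alpha> i)) (s i))"
  using semicircle unfolding semicircle_var_def by (simp add: star_sum star_smul)

lemma Re_tau_le_weighted_count:
  fixes \<alpha> :: "nat \<Rightarrow> complex"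
  defines "u \<equiv> \<Sum>i=1..L. smul (\<alpha> i) (s i)"
  shows "Re (tau ((u * star u) ^ p)) \<le> weighted_count {1..L} E (\<lambda>i. cmod (\<alpha> i)) (2 * p) []"
proof -
  define cs where "cs = concat (replicate p [\<alpha>, \<lambda>i. cnj (\<alpha> i)])"
  define coeff where "coeff xs = prod_list (map2 (\<lambda>c i. c i) cs xs)" for xs
  define count where "count xs = stack_count E (map (\<lambda>i. (i, 1)) xs) []" for xs
  have "length cs = 2 * p" "\<forall>c\<in>set cs. \<forall>i. cmod (c i) = cmod (\<alpha> i)"
    unfolding cs_def by (induction p) auto
  then have norm_coeff: "cmod (coeff xs) = (\<Prod>i\<leftarrow>xs. cmod (\<alpha> i))" if "xs \<in> words {1..L} (2 * p)" for xs
    using that unfolding coeff_def words_def by (intro norm_prod_list_map2) auto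
  have "(u * star u) ^ p = prod_list (map (\<lambda>c. \<Sum>i\<in>{1..L}. smul (c i) (s i)) cs)"
    unfolding cs_def prod_list_concat_replicate[symmetric] u_def star_linear_combination
    by (simp add: map_concat)
  also have "\<dots> = (\<Sum>xs\<in>words {1..L} (2 * p). smul (coeff xs) (prod_list (map s xs)))"
    unfolding expand_product coeff_def \<open>length cs = 2 * p\<close> ..
  finally have "tau ((u * star u) ^ p) = (\<Sum>xs\<in>words {1..L} (2 * p). coeff xs * of_nat (count xs))"
    unfolding count_def by (simp add: tau_sum tau_smul tau_word words_def)
  then have "Re (tau ((u * star u) ^ p)) \<le> (\<Sum>xs\<in>words {1..L} (2 * p). cmod (coeff xs) * real (count xs))"
    by (auto intro!: sum_mono mult_right_mono complex_Re_le_cmod)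
  also have "\<dots> = weighted_count {1..L} E (\<lambda>i. cmod (\<alpha> i)) (2 * p) []"
    unfolding weighted_count_eq_sum count_def by (intro sum.cong refl) (simp add: norm_coeff)
  finally show ?thesis .
qed

lemma Re_tau_le_catalan:
  fixes \<alpha> :: "nat \<Rightarrow> complex"
  defines "u \<equiv> \<Sum>i=1..L. smul (\<alpha> i) (s i)"
  assumes "\<And>y. y \<in> {1..L} \<Longrightarrow> 0 < c y"
    and "\<And>r y. set r \<subseteq> {1..L} \<Longrightarrow> length r \<le> p \<Longrightarrow> y \<in> poppable {1..L} E r \<Longrightarrow>
      real (card (poppable {1..L} E r)) \<le> c y"
  shows "Re (tau ((u * star u) ^ p)) \<le> catalan p * (\<Sum>i=1..L. c i * cmod (\<alpha> i) ^ 2) ^ p"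
proof -
  interpret stack_weights "{1..L}" E "\<lambda>i. cmod (\<alpha> i)" c
    using simple_graph_symp[OF graph] assms(2) by unfold_locales auto
  show ?thesis
    using Re_tau_le_weighted_count weighted_count_le_catalan[OF assms(3)] unfolding u_def
    by (rule order_trans)
qed

lemma Re_tau_le_catalan_clique:
  fixes \<alpha> :: "nat \<Rightarrow> complex"
  defines "u \<equiv> \<Sum>i=1..L. smul (\<alpha> i) (s i)"
  shows "Re (tau ((u * star u) ^ p))
    \<le> catalan p * (\<Sum>i=1..L. (cmod (\<alpha> i))\<^sup>2 * real (max_clique_at L E i)) ^ p"
proof -
  have "Re (tau ((u * star u) ^ p)) \<le> catalan p * (\<Sum>i=1..L. real (max_clique_at L E i) * cmod (\<alpha> i) ^ 2) ^ p"
    unfolding u_def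
  proof (rule Re_tau_le_catalan)
    show "0 < real (max_clique_at L E y)" if "y \<in> {1..L}" for y
      using max_clique_at_pos[of y L E] that by simp
    show "real (card (poppable {1..L} E r)) \<le> real (max_clique_at L E y)"
      if "y \<in> poppable {1..L} E r" for r y
      using card_le_max_clique_at[OF poppable_is_clique[OF simple_graph_symp[OF graph]] that] by simp
  qed
  then show ?thesis by (simp add: mult.commute)
qed

lemma Re_tau_le_catalan_length:
  fixes \<alpha> :: "nat \<Rightarrow> complex"
  defines "u \<equiv> \<Sum>i=1..L. smul (\<alpha> i) (s i)"
  assumes "1 \<le> p"
  shows "Re (tau ((u * star u) ^ p)) \<le> catalan p * (real p * (\<Sum>i=1..L. (cmod (\<alpha> i))\<^sup>2)) ^ p"
proof -
  have "Re (tau ((u * star u) ^ p)) \<le> catalan p * (\<Sum>i=1..L. real p * cmod (\<alpha> i) ^ 2) ^ p"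
    unfolding u_def
  proof (rule Re_tau_le_catalan)
    show "0 < real p" using assms(2) by simp
    show "real (card (poppable {1..L} E r)) \<le> real p" if "length r \<le> p" for r
      using card_mono[OF finite_set poppable_subset, of "{1..L}" E r] card_length[of r] that by simp
  qed
  then show ?thesis by (simp add: sum_distrib_left)
qed

lemma norm_2p_le:
  fixes \<alpha> :: "nat \<Rightarrow> complex"
  defines "u \<equiv> \<Sum>i=1..L. smul (\<alpha> i) (s i)"
  assumes p_pos: "1 \<le> p"
  shows "norm_2p star tau p u \<le> catalan p powr (1 / (2 * real p)) *
    sqrt (min (\<Sum>i=1..L. (cmod (\<alpha> i))\<^sup>2 * real (max_clique_at L E i)) (real p * (\<Sum>i=1..L. (cmod (\<alpha> i))\<^sup>2)))"
proof -
  define A where "A = (\<Sum>i=1..L. (cmod (\<alpha> i))\<^sup>2 * real (max_clique_at L E i))"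
  define W where "W = (\<Sum>i=1..L. (cmod (\<alpha> i))\<^sup>2)"
  have "Re (tau ((u * star u) ^ p)) \<le> catalan p * min A (real p * W) ^ p"
    using Re_tau_le_catalan_clique[of \<alpha> p] Re_tau_le_catalan_length[OF p_pos, of \<alpha>]
    unfolding u_def A_def W_def by (cases "A \<le> real p * W") (simp_all add: min_def A_def W_def)
  moreover have "0 \<le> A" "0 \<le> W" unfolding A_def W_def by (simp_all add: sum_nonneg)
  ultimately show ?thesis
    unfolding norm_2p_def A_def[symmetric] W_def[symmetric]
    by (intro powr_inverse_double_le) (use p_pos in \<open>simp_all add: Re_tau_power_mult_star_nonneg catalan_def\<close>)
qed

end

theorem theorem1p1:
  fixes smul :: "complex \<Rightarrow> 'a::{real_normed_algebra_1,banach} \<Rightarrow> 'a"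
    and star :: "'a \<Rightarrow> 'a" and tau :: "'a \<Rightarrow> complex"
    and L :: nat and E :: "nat \<Rightarrow> nat \<Rightarrow> bool"
    and s :: "nat \<Rightarrow> 'a" and \<alpha> :: "nat \<Rightarrow> complex" and p :: nat
  assumes "cstar_tracial_space smul star tau"
    and "simple_graph L E"
    and "\<forall>i\<in>{1..L}. semicircle_var star tau (s i)"
    and "G_independent L E tau (\<lambda>i. gen_star_alg smul star (s i))"
    and "p \<ge> 1"
  shows "norm_2p star tau p (\<Sum>i=1..L. smul (\<alpha> i) (s i))
           \<le> catalan p powr (1 / (2 * real p)) *
             sqrt (min (\<Sum>i=1..L. (cmod (\<alpha> i))\<^sup>2 * real (max_clique_at L E i))
                       (real p * (\<Sum>i=1..L. (cmod (\<alpha> i))\<^sup>2)))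
       \<and> norm_2p star tau p (\<Sum>i=1..L. smul (\<alpha> i) (s i))
           \<le> catalan p powr (1 / (2 * real p)) *
             sqrt (real (min (clique_number L E) p)) * sqrt (\<Sum>i=1..L. (cmod (\<alpha> i))\<^sup>2)"
proof -
  interpret G_semicircle_family smul star tau L E s
    using assms(1-4) by unfold_locales auto
  define A where "A = (\<Sum>i=1..L. (cmod (\<alpha> i))\<^sup>2 * real (max_clique_at L E i))"
  define W where "W = (\<Sum>i=1..L. (cmod (\<alpha> i))\<^sup>2)"
  have bound: "norm_2p star tau p (\<Sum>i=1..L. smul (\<alpha> i) (s i))
      \<le> catalan p powr (1 / (2 * real p)) * sqrt (min A (real p * W))"
    unfolding A_def W_def using norm_2p_le[OF assms(5)] .
  have "A \<le> (\<Sum>i=1..L. (cmod (\<alpha> i))\<^sup>2 * real (clique_number L E))"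
    unfolding A_def by (intro sum_mono mult_left_mono) (auto simp: max_clique_at_le_clique_number)
  then have "A \<le> real (clique_number L E) * W"
    unfolding W_def sum_distrib_left by (simp add: mult.commute)
  then have "min A (real p * W) \<le> real (min (clique_number L E) p) * W"
    unfolding W_def by (auto simp: min_def mult_right_mono sum_nonneg)
  then have "sqrt (min A (real p * W)) \<le> sqrt (real (min (clique_number L E) p)) * sqrt W"
    by (simp flip: real_sqrt_mult)
  then have "catalan p powr (1 / (2 * real p)) * sqrt (min A (real p * W))
      \<le> catalan p powr (1 / (2 * real p)) * (sqrt (real (min (clique_number L E) p)) * sqrt W)"
    by (rule mult_left_mono) simp
  then show ?thesis
    using bound order_trans[OF bound] unfolding A_def W_def by (simp add: mult.assoc)
qed

end
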